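(* Let $m\geq 2$ and let $\mathbb{H}^m=(B^m,g)$ be the hyperbolic space, where $B^m$ is the open unit ball of $\mathbb{R}^m$ centred at $0$ and $g=4|dx|^2/(1-|x|^2)^2$ (constant sectional curvature $-1$). Let $r(x)=\log\left(\frac{1+|x|}{1-|x|}\right)$ be the $g$-distance from $x$ to $0$. For $c\in[1-m,m-1]$ define $f_c:\mathbb{H}^m\to\mathbb{R}$ by \[ f_c(x)=\int_0^{r(x)}\frac{A_c(s)}{\sqrt{1-A_c(s)^2}}\,ds,\qquad A_c(s)=\frac{c}{(\sinh s)^{m-1}}\int_0^s(\sinh t)^{m-1}\,dt . \] Then for each $c\in[1-m,m-1]$ the family $\{\Gamma_{f_c+d}(x):\ x\in\mathbb{H}^m,\ d\in\mathbb{R}\}$ defines a foliation of $\mathbb{H}^m\times\mathbb{R}$ (with the Riemannian product metric $g+dt^2$) by hypersurfaces $\Gamma_{f_c+d}$, $d\in\mathbb{R}$, each of constant mean curvature $c$, in the sense that $m\langle H,\nu\rangle=c$ (so $\|H\|=|c|/m$), where $H$ is the mean curvature vector of the graph and $\nu=\frac{(-\nabla f,1)}{\sqrt{1+\|\nabla f\|^2}}$ is its unit normal, $f=f_c+d$.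
   Context: For a map $f:M\to\mathbb{R}$, the graph is $\Gamma_f(x)=(x,f(x))$, and $\Gamma_f$ also denotes the image $\{(x,f(x))\}\subset M\times\mathbb{R}$. The mean curvature vector $H$ is the trace of the second fundamental form divided by the dimension $m$; $\nabla f$ is the $g$-gradient of $f$. *)

theory Defs
  imports "HOL-Analysis.Analysis"
begin

definition partial :: "(real^'n \<Rightarrow> real) \<Rightarrow> 'n \<Rightarrow> real^'n \<Rightarrow> real" where
  "partial \<phi> i x = deriv (\<lambda>t. \<phi> (x + t *\<^sub>R axis i 1)) 0"

fun partials :: "'n list \<Rightarrow> (real^'n \<Rightarrow> real) \<Rightarrow> real^'n \<Rightarrow> real" where
  "partials [] \<phi> = \<phi>"
| "partials (i # is) \<phi> = partial (partials is \<phi>) i"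

definition smooth_on :: "(real^'n) set \<Rightarrow> (real^'n \<Rightarrow> real) \<Rightarrow> bool" where
  "smooth_on U \<phi> \<longleftrightarrow>
     (\<forall>is. continuous_on U (partials is \<phi>) \<and>
        (\<forall>i. \<forall>x\<in>U. (\<lambda>t. partials is \<phi> (x + t *\<^sub>R axis i 1)) differentiable (at 0)))"

definition metric_inv :: "(real^'n \<Rightarrow> 'n \<Rightarrow> 'n \<Rightarrow> real) \<Rightarrow> real^'n \<Rightarrow> 'n \<Rightarrow> 'n \<Rightarrow> real" where
  "metric_inv G p i j = matrix_inv (\<chi> a b. G p a b) $ i $ j"

definition christoffel :: "(real^'n \<Rightarrow> 'n \<Rightarrow> 'n \<Rightarrow> real) \<Rightarrow> real^'n \<Rightarrow> 'n \<Rightarrow> 'n \<Rightarrow> 'n \<Rightarrow> real" where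
  "christoffel G p k i j = (1/2) * (\<Sum>l\<in>UNIV. metric_inv G p k l *
      (partial (\<lambda>q. G q l j) i p + partial (\<lambda>q. G q i l) j p - partial (\<lambda>q. G q i j) l p))"

definition metric_inner :: "(real^'n \<Rightarrow> 'n \<Rightarrow> 'n \<Rightarrow> real) \<Rightarrow> real^'n \<Rightarrow> real^'n \<Rightarrow> real^'n \<Rightarrow> real" where
  "metric_inner G p u v = (\<Sum>a\<in>UNIV. \<Sum>b\<in>UNIV. G p a b * u $ a * v $ b)"

definition hyp_metric :: "real^('m::finite) \<Rightarrow> 'm \<Rightarrow> 'm \<Rightarrow> real" where
  "hyp_metric x i j = (if i = j then 4 / (1 - (norm x)\<^sup>2)\<^sup>2 else 0)"

text \<open>Ambient coordinates on B^m x R: index Some i for the ball, None for the R-factor.\<close>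
definition base_pt :: "real^(('m::finite) option) \<Rightarrow> real^('m::finite)" where
  "base_pt p = (\<chi> i. p $ Some i)"

definition prod_metric :: "real^(('m::finite) option) \<Rightarrow> ('m::finite) option \<Rightarrow> ('m::finite) option \<Rightarrow> real" where
  "prod_metric p a b =
     (case (a, b) of (Some i, Some j) \<Rightarrow> hyp_metric (base_pt p) i j
                   | (None, None) \<Rightarrow> 1
                   | _ \<Rightarrow> 0)"

definition hyp_r :: "real^('m::finite) \<Rightarrow> real" where
  "hyp_r x = ln ((1 + norm x) / (1 - norm x))"

definition A_fun :: "nat \<Rightarrow> real \<Rightarrow> real \<Rightarrow> real" where
  "A_fun m c s = c / (sinh s) ^ (m - 1) * integral {0..s} (\<lambda>t. (sinh t) ^ (m - 1))"

definition f_fun :: "nat \<Rightarrow> real \<Rightarrow> real^('m::finite) \<Rightarrow> real" where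
  "f_fun m c x = integral {0..hyp_r x} (\<lambda>s. A_fun m c s / sqrt (1 - (A_fun m c s)\<^sup>2))"

definition graph_map :: "(real^('m::finite) \<Rightarrow> real) \<Rightarrow> real^('m::finite) \<Rightarrow> real^(('m::finite) option)" where
  "graph_map f x = (\<chi> a. case a of Some i \<Rightarrow> x $ i | None \<Rightarrow> f x)"

definition graph_set :: "(real^('m::finite) \<Rightarrow> real) \<Rightarrow> (real^(('m::finite) option)) set" where
  "graph_set f = graph_map f ` ball 0 1"

definition dgraph :: "(real^('m::finite) \<Rightarrow> real) \<Rightarrow> 'm \<Rightarrow> real^('m::finite) \<Rightarrow> real^(('m::finite) option)" where
  "dgraph f i x = (\<chi> a. partial (\<lambda>y. graph_map f y $ a) i x)"

definition ddgraph :: "(real^('m::finite) \<Rightarrow> real) \<Rightarrow> 'm \<Rightarrow> 'm \<Rightarrow> real^('m::finite) \<Rightarrow> real^(('m::finite) option)" where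
  "ddgraph f i j x = (\<chi> a. partial (\<lambda>y. partial (\<lambda>z. graph_map f z $ a) j y) i x)"

definition ind_metric :: "(real^('m::finite) \<Rightarrow> real) \<Rightarrow> real^('m::finite) \<Rightarrow> 'm \<Rightarrow> 'm \<Rightarrow> real" where
  "ind_metric f x i j = metric_inner prod_metric (graph_map f x) (dgraph f i x) (dgraph f j x)"

definition hyp_grad :: "(real^('m::finite) \<Rightarrow> real) \<Rightarrow> real^('m::finite) \<Rightarrow> real^('m::finite)" where
  "hyp_grad f x = (\<chi> k. \<Sum>l\<in>UNIV. metric_inv hyp_metric x k l * partial f l x)"

definition hyp_grad_norm :: "(real^('m::finite) \<Rightarrow> real) \<Rightarrow> real^('m::finite) \<Rightarrow> real" where
  "hyp_grad_norm f x = sqrt (metric_inner hyp_metric x (hyp_grad f x) (hyp_grad f x))"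

definition graph_normal :: "(real^('m::finite) \<Rightarrow> real) \<Rightarrow> real^('m::finite) \<Rightarrow> real^(('m::finite) option)" where
  "graph_normal f x = (1 / sqrt (1 + (hyp_grad_norm f x)\<^sup>2)) *\<^sub>R
      (\<chi> a. case a of Some k \<Rightarrow> - (hyp_grad f x $ k) | None \<Rightarrow> 1)"

definition amb_cov :: "(real^('m::finite) \<Rightarrow> real) \<Rightarrow> 'm \<Rightarrow> 'm \<Rightarrow> real^('m::finite) \<Rightarrow> real^(('m::finite) option)" where
  "amb_cov f i j x = (\<chi> a. ddgraph f i j x $ a +
      (\<Sum>b\<in>UNIV. \<Sum>c\<in>UNIV. christoffel prod_metric (graph_map f x) a b c
                         * dgraph f i x $ b * dgraph f j x $ c))"

text \<open>Vector-valued second fundamental form: normal component of nabla-bar_{d_i} d_j Gamma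
  (the normal space is spanned by the unit normal nu).\<close>
definition sff :: "(real^('m::finite) \<Rightarrow> real) \<Rightarrow> 'm \<Rightarrow> 'm \<Rightarrow> real^('m::finite) \<Rightarrow> real^(('m::finite) option)" where
  "sff f i j x = metric_inner prod_metric (graph_map f x) (amb_cov f i j x) (graph_normal f x)
                  *\<^sub>R graph_normal f x"

definition mean_curv_vec :: "(real^('m::finite) \<Rightarrow> real) \<Rightarrow> real^('m::finite) \<Rightarrow> real^(('m::finite) option)" where
  "mean_curv_vec f x = (1 / real CARD('m)) *\<^sub>R
     (\<Sum>i\<in>UNIV. \<Sum>j\<in>UNIV. metric_inv (ind_metric f) x i j *\<^sub>R sff f i j x)"

end

theory Submission
  imports Defs
begin

text \<open>
  Everything is radial: \<open>f\<^sub>c\<close> depends on \<open>x\<close> only through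
  \<open>\<sigma> = cosh r(x) = (1 + |x|\<^sup>2) / (1 - |x|\<^sup>2)\<close>. Let \<open>z(\<sigma>)\<close> be the volume ratio
  \<open>(\<integral>\<^sub>0\<^sup>s sinh\<^bsup>m-1\<^esup>) / sinh\<^sup>m s\<close> at \<open>\<sigma> = cosh s\<close>. Then \<open>A\<^sub>c(s) = c sinh s z(cosh s)\<close>,
  so \<open>f\<^sub>c = P(\<sigma>) - P(1)\<close> with \<open>P' = c z / \<surd>Q\<close>, where \<open>Q = 1 - c\<^sup>2 (\<sigma>\<^sup>2 - 1) z\<^sup>2\<close>.
  Here \<open>Q > 0\<close>, because \<open>(m - 1) \<integral>\<^sub>0\<^sup>s sinh\<^bsup>m-1\<^esup> < sinh\<^bsup>m-1\<^esup> s\<close> and \<open>|c| \<le> m - 1\<close>.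
  The substitution \<open>t = 1 + (\<sigma> - 1) \<tau>\<close> in \<open>\<integral>\<^sub>1\<^sup>\<sigma> (t\<^sup>2 - 1)\<^bsup>(m-2)/2\<^esup> dt\<close> gives \<open>z\<close> as a
  parameter integral that is smooth for \<open>\<sigma> > -1\<close>. Hence \<open>f\<^sub>c\<close> is a smooth function of
  \<open>|x|\<^sup>2\<close>, and differentiating \<open>(\<sigma>\<^sup>2 - 1)\<^bsup>m/2\<^esup> z = \<integral>\<^sub>1\<^sup>\<sigma> (t\<^sup>2 - 1)\<^bsup>(m-2)/2\<^esup> dt\<close> gives
  the ODE \<open>m \<sigma> z + (\<sigma>\<^sup>2 - 1) z' = 1\<close>.

  The graphs of \<open>f\<^sub>c + d\<close> are vertical translates of each other, so each point of
  \<open>H\<^sup>m \<times> \<real>\<close> lies on exactly one of them.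

  For the graph of \<open>P(\<sigma>)\<close> in the ball model, the conformal factor is \<open>(\<sigma> + 1)\<^sup>2\<close> and
  the induced metric is a rank-one perturbation of it. An explicit coordinate computation then
  gives \<open>m\<langle>H, \<nu>\<rangle> = ((m - 1) \<sigma> \<phi> + (\<sigma> \<phi> + (\<sigma>\<^sup>2 - 1) \<phi>') / W\<^sup>2) / W\<close>, where
  \<open>\<phi> = P'\<close> and \<open>W\<^sup>2 = 1 + (\<sigma>\<^sup>2 - 1) \<phi>\<^sup>2\<close>. For our \<open>P\<close> we have \<open>W = 1 / \<surd>Q\<close>, and the
  ODE for \<open>z\<close> reduces the right-hand side to \<open>c\<close>.
\<close>

section \<open>Smooth functions of one real variable\<close>

definition deriv_closed :: "real set \<Rightarrow> (real \<Rightarrow> real) set \<Rightarrow> bool" where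
  "deriv_closed S F \<longleftrightarrow> (\<forall>h\<in>F. \<exists>h'\<in>F. \<forall>x\<in>S. (h has_real_derivative h' x) (at x))"

definition smooth_real_on :: "real set \<Rightarrow> (real \<Rightarrow> real) \<Rightarrow> bool" where
  "smooth_real_on S h \<longleftrightarrow> (\<exists>F. deriv_closed S F \<and> h \<in> F)"

lemma smooth_real_onI: "deriv_closed S F \<Longrightarrow> h \<in> F \<Longrightarrow> smooth_real_on S h"
  unfolding smooth_real_on_def by blast

lemma smooth_real_onE:
  assumes "smooth_real_on S h"
  obtains h' where "smooth_real_on S h'" "\<And>x. x \<in> S \<Longrightarrow> (h has_real_derivative h' x) (at x)"
  using assms unfolding smooth_real_on_def deriv_closed_def by blast

lemma smooth_real_on_primitive:
  assumes "\<And>x. x \<in> S \<Longrightarrow> (h has_real_derivative h' x) (at x)" and "smooth_real_on S h'"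
  shows "smooth_real_on S h"
proof (rule smooth_real_onI)
  show "deriv_closed S (insert h {g. smooth_real_on S g})"
    unfolding deriv_closed_def
  proof
    fix g assume "g \<in> insert h {g. smooth_real_on S g}"
    then consider "g = h" | "smooth_real_on S g" by blast
    then show "\<exists>g'\<in>insert h {g. smooth_real_on S g}. \<forall>x\<in>S. (g has_real_derivative g' x) (at x)"
    proof cases
      case 1
      then show ?thesis using assms by blast
    next
      case 2
      then obtain g' where "smooth_real_on S g'" "\<And>x. x \<in> S \<Longrightarrow> (g has_real_derivative g' x) (at x)"
        by (rule smooth_real_onE) blast
      then show ?thesis by blast
    qed
  qed
qed simp

lemma smooth_real_on_cong:
  assumes h: "smooth_real_on S h" and "open S" and eq: "\<And>x. x \<in> S \<Longrightarrow> h x = k x"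
  shows "smooth_real_on S k"
proof -
  obtain h' where h': "smooth_real_on S h'" "\<And>x. x \<in> S \<Longrightarrow> (h has_real_derivative h' x) (at x)"
    using h by (rule smooth_real_onE) blast
  have "(k has_real_derivative h' x) (at x)" if "x \<in> S" for x
  proof -
    have ev: "\<forall>\<^sub>F y in nhds x. h y = k y"
      using \<open>open S\<close> that eq eventually_nhds by blast
    show ?thesis
      using h'(2)[OF that] DERIV_cong_ev[OF refl ev refl] eq[OF that] by simp
  qed
  then show ?thesis using h'(1) by (rule smooth_real_on_primitive)
qed

lemma deriv_closed_subset: "deriv_closed S F \<Longrightarrow> T \<subseteq> S \<Longrightarrow> deriv_closed T F"
  unfolding deriv_closed_def by blast

lemma smooth_real_on_subset: "smooth_real_on S h \<Longrightarrow> T \<subseteq> S \<Longrightarrow> smooth_real_on T h"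
  unfolding smooth_real_on_def using deriv_closed_subset by blast

lemma smooth_real_on_imp_continuous_on: "smooth_real_on S h \<Longrightarrow> continuous_on S h"
  by (erule smooth_real_onE) (meson DERIV_isCont continuous_at_imp_continuous_on)

lemma smooth_real_on_has_deriv:
  "smooth_real_on S h \<Longrightarrow> x \<in> S \<Longrightarrow> (h has_real_derivative deriv h x) (at x)"
  by (erule smooth_real_onE) (metis DERIV_imp_deriv)

lemma smooth_real_on_deriv:
  assumes "smooth_real_on S h" "open S"
  shows "smooth_real_on S (deriv h)"
proof -
  obtain h' where h': "smooth_real_on S h'" "\<And>x. x \<in> S \<Longrightarrow> (h has_real_derivative h' x) (at x)"
    using assms(1) by (rule smooth_real_onE) blast
  show ?thesis
    by (rule smooth_real_on_cong[OF h'(1) assms(2)]) (simp add: DERIV_imp_deriv[OF h'(2)])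
qed

inductive_set comp_algebra :: "real set \<Rightarrow> real set \<Rightarrow> (real \<Rightarrow> real) \<Rightarrow> (real \<Rightarrow> real) set"
  for S T k where
  base: "smooth_real_on S a \<Longrightarrow> a \<in> comp_algebra S T k"
| comp: "smooth_real_on T h \<Longrightarrow> (\<lambda>x. h (k x)) \<in> comp_algebra S T k"
| mult: "a \<in> comp_algebra S T k \<Longrightarrow> b \<in> comp_algebra S T k \<Longrightarrow> (\<lambda>x. a x * b x) \<in> comp_algebra S T k"
| add: "a \<in> comp_algebra S T k \<Longrightarrow> b \<in> comp_algebra S T k \<Longrightarrow> (\<lambda>x. a x + b x) \<in> comp_algebra S T k"

lemma deriv_closed_comp_algebra:
  assumes k: "smooth_real_on S k" and kST: "\<And>x. x \<in> S \<Longrightarrow> k x \<in> T"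
  shows "deriv_closed S (comp_algebra S T k)"
  unfolding deriv_closed_def
proof
  fix g assume "g \<in> comp_algebra S T k"
  then show "\<exists>g'\<in>comp_algebra S T k. \<forall>x\<in>S. (g has_real_derivative g' x) (at x)"
  proof induction
    case (base a)
    then obtain a' where "smooth_real_on S a'" "\<And>x. x \<in> S \<Longrightarrow> (a has_real_derivative a' x) (at x)"
      by (rule smooth_real_onE) blast
    then show ?case by (blast intro: comp_algebra.base)
  next
    case (comp h)
    obtain h' where h': "smooth_real_on T h'" "\<And>y. y \<in> T \<Longrightarrow> (h has_real_derivative h' y) (at y)"
      using comp by (rule smooth_real_onE) blast
    obtain k' where k': "smooth_real_on S k'" "\<And>x. x \<in> S \<Longrightarrow> (k has_real_derivative k' x) (at x)"
      using k by (rule smooth_real_onE) blast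
    have "(\<lambda>x. h' (k x) * k' x) \<in> comp_algebra S T k"
      by (intro comp_algebra.mult comp_algebra.comp comp_algebra.base h' k')
    moreover have "\<forall>x\<in>S. ((\<lambda>x. h (k x)) has_real_derivative h' (k x) * k' x) (at x)"
      using DERIV_chain2[OF h'(2)[OF kST] k'(2)] by blast
    ultimately show ?case by (intro bexI[of _ "\<lambda>x. h' (k x) * k' x"]) auto
  next
    case (mult a b)
    then obtain a' b' where "a' \<in> comp_algebra S T k" "b' \<in> comp_algebra S T k"
      "\<forall>x\<in>S. (a has_real_derivative a' x) (at x)" "\<forall>x\<in>S. (b has_real_derivative b' x) (at x)"
      by blast
    with mult.hyps show ?case
      by (intro bexI[of _ "\<lambda>x. a' x * b x + a x * b' x"] comp_algebra.add comp_algebra.mult)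
        (auto intro!: derivative_eq_intros)
  next
    case (add a b)
    then obtain a' b' where "a' \<in> comp_algebra S T k" "b' \<in> comp_algebra S T k"
      "\<forall>x\<in>S. (a has_real_derivative a' x) (at x)" "\<forall>x\<in>S. (b has_real_derivative b' x) (at x)"
      by blast
    then show ?case
      by (intro bexI[of _ "\<lambda>x. a' x + b' x"] comp_algebra.add) (auto intro!: derivative_eq_intros)
  qed
qed

lemma smooth_real_on_const: "smooth_real_on S (\<lambda>x. a)"
  by (rule smooth_real_onI[of S "range (\<lambda>b x. b)"]) (auto simp: deriv_closed_def intro!: exI[of _ 0])

lemma smooth_real_on_id: "smooth_real_on S (\<lambda>x. x)"
  by (rule smooth_real_on_primitive[of S _ "\<lambda>x. 1"]) (auto intro: smooth_real_on_const)

lemma smooth_real_on_compose: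
  assumes "smooth_real_on T h" "smooth_real_on S k" "\<And>x. x \<in> S \<Longrightarrow> k x \<in> T"
  shows "smooth_real_on S (\<lambda>x. h (k x))"
  using smooth_real_onI[OF deriv_closed_comp_algebra[OF assms(2,3)] comp_algebra.comp[OF assms(1)]] .

lemma deriv_closed_comp_algebra_id: "deriv_closed S (comp_algebra S S (\<lambda>x. x))"
  by (rule deriv_closed_comp_algebra[OF smooth_real_on_id])

lemma smooth_real_on_mult:
  assumes "smooth_real_on S a" "smooth_real_on S b"
  shows "smooth_real_on S (\<lambda>x. a x * b x)"
  by (rule smooth_real_onI[OF deriv_closed_comp_algebra_id])
    (intro comp_algebra.mult comp_algebra.base assms)

lemma smooth_real_on_add:
  assumes "smooth_real_on S a" "smooth_real_on S b"
  shows "smooth_real_on S (\<lambda>x. a x + b x)"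
  by (rule smooth_real_onI[OF deriv_closed_comp_algebra_id])
    (intro comp_algebra.add comp_algebra.base assms)

lemma smooth_real_on_powr: "smooth_real_on {0<..} (\<lambda>x. x powr b)"
proof (rule smooth_real_onI)
  show "deriv_closed {0<..} {\<lambda>x. a * x powr b | a b. True}"
    unfolding deriv_closed_def
  proof clarify
    fix a b :: real
    have "\<forall>x\<in>{0<..}. ((\<lambda>x. a * x powr b) has_real_derivative (a * b) * x powr (b - 1)) (at x)"
      by (auto intro!: derivative_eq_intros)
    then show "\<exists>h'\<in>{\<lambda>x. a * x powr b | a b. True}.
        \<forall>x\<in>{0<..}. ((\<lambda>x. a * x powr b) has_real_derivative h' x) (at x)"
      by (intro bexI[of _ "\<lambda>x. (a * b) * x powr (b - 1)"]) auto
  qed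
  show "(\<lambda>x. x powr b) \<in> {\<lambda>x. a * x powr b | a b. True}"
    by (rule CollectI, rule exI[of _ 1], rule exI[of _ b]) simp
qed

section \<open>Smooth functions on the unit ball\<close>

lemma eventually_line_in_open:
  fixes x :: "'a::real_normed_vector"
  assumes "open U" "x \<in> U"
  shows "\<forall>\<^sub>F t in nhds (0::real). x + t *\<^sub>R v \<in> U"
proof -
  have "open ((\<lambda>t::real. x + t *\<^sub>R v) -` U)"
    by (rule continuous_open_vimage[OF assms(1)]) (intro continuous_intros)
  moreover have "0 \<in> (\<lambda>t::real. x + t *\<^sub>R v) -` U" using assms(2) by simp
  ultimately show ?thesis
    by (rule eventually_nhds_in_open[THEN eventually_mono]) simp
qed

lemma has_real_derivative_line_cong:
  fixes x :: "'a::real_normed_vector"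
  assumes "open U" "x \<in> U" "\<And>y. y \<in> U \<Longrightarrow> \<phi> y = \<psi> y"
  shows "((\<lambda>t. \<phi> (x + t *\<^sub>R v)) has_real_derivative D) (at 0) \<longleftrightarrow>
         ((\<lambda>t. \<psi> (x + t *\<^sub>R v)) has_real_derivative D) (at 0)"
  by (rule DERIV_cong_ev[OF refl eventually_mono[OF eventually_line_in_open[OF assms(1,2), of v]] refl])
    (simp add: assms(3))

lemma partial_eqI:
  "((\<lambda>t. \<phi> (x + t *\<^sub>R axis i 1)) has_real_derivative D) (at 0) \<Longrightarrow> partial \<phi> i x = D"
  unfolding partial_def by (rule DERIV_imp_deriv)

lemma partial_cong:
  assumes "open U" "x \<in> U" "\<And>y. y \<in> U \<Longrightarrow> \<phi> y = \<psi> y"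
  shows "partial \<phi> i x = partial \<psi> i x"
  unfolding partial_def
  by (rule deriv_cong_ev[OF eventually_mono[OF eventually_line_in_open[OF assms(1,2), of "axis i 1"]] refl])
    (simp add: assms(3))

lemma partial_const: "partial (\<lambda>y. a) i x = 0"
  unfolding partial_def by simp

lemma has_real_derivative_line_coord:
  fixes x :: "real^'m"
  shows "((\<lambda>t. (x + t *\<^sub>R axis i 1) $ k) has_real_derivative (if k = i then 1 else 0)) (at 0)"
proof -
  have "((\<lambda>t. x $ k + t * (if k = i then 1 else 0)) has_real_derivative (if k = i then 1 else 0)) (at 0)"
    by (auto intro!: derivative_eq_intros)
  then show ?thesis by (simp add: axis_def)
qed

lemma partial_coord: "partial (\<lambda>y. y $ k) i x = (if k = i then 1 else 0)"
  by (rule partial_eqI, rule has_real_derivative_line_coord)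

lemma has_real_derivative_line_norm_sq:
  fixes x :: "real^'m"
  shows "((\<lambda>t. (norm (x + t *\<^sub>R axis i 1))\<^sup>2) has_real_derivative 2 * x $ i) (at 0)"
proof -
  have "(norm (x + t *\<^sub>R axis i 1))\<^sup>2 = (norm x)\<^sup>2 + 2 * t * x $ i + t\<^sup>2" for t
  proof -
    have "(norm (x + t *\<^sub>R axis i 1))\<^sup>2 = (x + t *\<^sub>R axis i 1) \<bullet> (x + t *\<^sub>R axis i 1)"
      by (simp add: dot_square_norm)
    also have "\<dots> = x \<bullet> x + 2 * t * (x \<bullet> axis i 1) + t\<^sup>2 * (axis i 1 \<bullet> axis i (1::real))"
      by (simp add: inner_add_left inner_add_right inner_commute algebra_simps power2_eq_square)
    finally show ?thesis
      by (simp add: dot_square_norm inner_axis)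
  qed
  moreover have "((\<lambda>t. (norm x)\<^sup>2 + 2 * t * x $ i + t\<^sup>2) has_real_derivative 2 * x $ i) (at 0)"
    by (auto intro!: derivative_eq_intros)
  ultimately show ?thesis by simp
qed

lemma has_real_derivative_line_radial:
  fixes x :: "real^'m"
  assumes "(h has_real_derivative h') (at ((norm x)\<^sup>2))"
  shows "((\<lambda>t. h ((norm (x + t *\<^sub>R axis i 1))\<^sup>2)) has_real_derivative h' * (2 * x $ i)) (at 0)"
proof -
  have "(h has_real_derivative h') (at ((norm (x + 0 *\<^sub>R axis i 1))\<^sup>2))"
    using assms by simp
  from DERIV_chain2[OF this has_real_derivative_line_norm_sq] show ?thesis by simp
qed

inductive_set radial_algebra :: "real set \<Rightarrow> (real^'m \<Rightarrow> real) set" for T where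
  coord: "(\<lambda>x. x $ k) \<in> radial_algebra T"
| radial: "smooth_real_on T h \<Longrightarrow> (\<lambda>x. h ((norm x)\<^sup>2)) \<in> radial_algebra T"
| mult: "a \<in> radial_algebra T \<Longrightarrow> b \<in> radial_algebra T \<Longrightarrow> (\<lambda>x. a x * b x) \<in> radial_algebra T"
| add: "a \<in> radial_algebra T \<Longrightarrow> b \<in> radial_algebra T \<Longrightarrow> (\<lambda>x. a x + b x) \<in> radial_algebra T"

lemma radial_algebra_const: "(\<lambda>x. a) \<in> radial_algebra T"
  using radial_algebra.radial[OF smooth_real_on_const] .

lemma norm_sq_in_unit_interval: "x \<in> ball (0::'a::real_normed_vector) 1 \<Longrightarrow> (norm x)\<^sup>2 \<in> {0..<1}"
  by (simp add: abs_square_less_1)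

lemma radial_algebra_continuous_on:
  assumes "{0..<1} \<subseteq> T" "\<phi> \<in> radial_algebra T"
  shows "continuous_on (ball 0 1) \<phi>"
  using assms(2)
proof induction
  case (radial h)
  have T: "(norm x)\<^sup>2 \<in> T" if "x \<in> ball 0 1" for x :: "real^'a"
    using assms(1) norm_sq_in_unit_interval[OF that] by blast
  show ?case
    by (rule continuous_on_compose2[OF smooth_real_on_imp_continuous_on[OF radial]])
      (auto intro!: continuous_intros T)
qed (auto intro!: continuous_intros)

lemma radial_algebra_line_deriv:
  assumes T: "{0..<1} \<subseteq> T" and "\<phi> \<in> radial_algebra T"
  shows "\<exists>\<psi>\<in>radial_algebra T. \<forall>x\<in>ball 0 1.
    ((\<lambda>t. \<phi> (x + t *\<^sub>R axis i 1)) has_real_derivative \<psi> x) (at 0)"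
  using assms(2)
proof induction
  case (coord k)
  show ?case
    using has_real_derivative_line_coord[of _ i k]
    by (intro bexI[OF _ radial_algebra_const[of "if k = i then 1 else 0"]]) simp
next
  case (radial h)
  obtain h' where h': "smooth_real_on T h'" "\<And>u. u \<in> T \<Longrightarrow> (h has_real_derivative h' u) (at u)"
    using radial by (rule smooth_real_onE) blast
  have "(\<lambda>x. h' ((norm x)\<^sup>2) * (2 * x $ i)) \<in> radial_algebra T"
    by (intro radial_algebra.mult radial_algebra.radial[OF h'(1)] radial_algebra_const radial_algebra.coord)
  moreover have "\<forall>x\<in>ball 0 1. ((\<lambda>t. h ((norm (x + t *\<^sub>R axis i 1))\<^sup>2)) has_real_derivative
      h' ((norm x)\<^sup>2) * (2 * x $ i)) (at 0)"
  proof
    fix x :: "real^'a" assume "x \<in> ball 0 1"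
    then have "(norm x)\<^sup>2 \<in> T" using T norm_sq_in_unit_interval by blast
    then show "((\<lambda>t. h ((norm (x + t *\<^sub>R axis i 1))\<^sup>2)) has_real_derivative
        h' ((norm x)\<^sup>2) * (2 * x $ i)) (at 0)"
      by (rule has_real_derivative_line_radial[OF h'(2)])
  qed
  ultimately show ?case by (intro bexI[of _ "\<lambda>x. h' ((norm x)\<^sup>2) * (2 * x $ i)"]) auto
next
  case (mult a b)
  then obtain a' b' where "a' \<in> radial_algebra T" "b' \<in> radial_algebra T"
    "\<forall>x\<in>ball 0 1. ((\<lambda>t. a (x + t *\<^sub>R axis i 1)) has_real_derivative a' x) (at 0)"
    "\<forall>x\<in>ball 0 1. ((\<lambda>t. b (x + t *\<^sub>R axis i 1)) has_real_derivative b' x) (at 0)"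
    by blast
  with mult.hyps show ?case
    by (intro bexI[of _ "\<lambda>x. a' x * b x + a x * b' x"] radial_algebra.add radial_algebra.mult)
      (auto intro!: derivative_eq_intros)
next
  case (add a b)
  then obtain a' b' where "a' \<in> radial_algebra T" "b' \<in> radial_algebra T"
    "\<forall>x\<in>ball 0 1. ((\<lambda>t. a (x + t *\<^sub>R axis i 1)) has_real_derivative a' x) (at 0)"
    "\<forall>x\<in>ball 0 1. ((\<lambda>t. b (x + t *\<^sub>R axis i 1)) has_real_derivative b' x) (at 0)"
    by blast
  then show ?case
    by (intro bexI[of _ "\<lambda>x. a' x + b' x"] radial_algebra.add) (auto intro!: derivative_eq_intros)
qed

lemma radial_algebra_partials:
  assumes T: "{0..<1} \<subseteq> T" and \<phi>: "\<phi> \<in> radial_algebra T"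
  shows "\<exists>\<psi>\<in>radial_algebra T. \<forall>x\<in>ball 0 1. partials is \<phi> x = \<psi> x"
proof (induction "is")
  case Nil
  then show ?case using \<phi> by auto
next
  case (Cons i "is")
  then obtain \<psi> where \<psi>: "\<psi> \<in> radial_algebra T" "\<forall>x\<in>ball 0 1. partials is \<phi> x = \<psi> x"
    by blast
  obtain \<psi>' where \<psi>': "\<psi>' \<in> radial_algebra T"
    "\<forall>x\<in>ball 0 1. ((\<lambda>t. \<psi> (x + t *\<^sub>R axis i 1)) has_real_derivative \<psi>' x) (at 0)"
    using radial_algebra_line_deriv[OF T \<psi>(1)] by blast
  have "partials (i # is) \<phi> x = \<psi>' x" if "x \<in> ball 0 1" for x
  proof -
    have "partials (i # is) \<phi> x = partial \<psi> i x"
      using partial_cong[of "ball 0 1" x "partials is \<phi>" \<psi> i] \<psi>(2) that by simp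
    also have "\<dots> = \<psi>' x"
      using partial_eqI \<psi>'(2) that by blast
    finally show ?thesis .
  qed
  then show ?case using \<psi>'(1) by blast
qed

lemma radial_algebra_smooth_on:
  assumes T: "{0..<1} \<subseteq> T" and \<phi>: "\<phi> \<in> radial_algebra T"
  shows "smooth_on (ball 0 1) \<phi>"
  unfolding smooth_on_def
proof (intro allI conjI ballI)
  fix "is"
  obtain \<psi> where \<psi>: "\<psi> \<in> radial_algebra T" "\<forall>x\<in>ball 0 1. partials is \<phi> x = \<psi> x"
    using radial_algebra_partials[OF T \<phi>] by blast
  show "continuous_on (ball 0 1) (partials is \<phi>)"
    using radial_algebra_continuous_on[OF T \<psi>(1)] \<psi>(2) continuous_on_cong by (metis (no_types, lifting))
  fix i x assume x: "x \<in> ball (0::real^'a) 1"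
  obtain \<psi>' where "((\<lambda>t. \<psi> (x + t *\<^sub>R axis i 1)) has_real_derivative \<psi>' x) (at 0)"
    using radial_algebra_line_deriv[OF T \<psi>(1)] x by blast
  then have "((\<lambda>t. partials is \<phi> (x + t *\<^sub>R axis i 1)) has_real_derivative \<psi>' x) (at 0)"
    using has_real_derivative_line_cong[of "ball 0 1" x "partials is \<phi>" \<psi>] x \<psi>(2) by simp
  then show "(\<lambda>t. partials is \<phi> (x + t *\<^sub>R axis i 1)) differentiable at 0"
    using real_differentiable_def by blast
qed

lemma smooth_on_cong:
  assumes \<phi>: "smooth_on U \<phi>" and U: "open U" and eq: "\<And>x. x \<in> U \<Longrightarrow> \<phi> x = \<psi> x"
  shows "smooth_on U \<psi>"
proof -
  have partials_eq: "\<forall>x\<in>U. partials is \<phi> x = partials is \<psi> x" for "is"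
  proof (induction "is")
    case (Cons i "is")
    then show ?case using partial_cong[OF U, of _ "partials is \<phi>" "partials is \<psi>" i] by simp
  qed (simp add: eq)
  show ?thesis
    unfolding smooth_on_def
  proof (intro allI conjI ballI)
    fix "is"
    show "continuous_on U (partials is \<psi>)"
      using \<phi> partials_eq[of "is"] continuous_on_cong unfolding smooth_on_def by (metis (no_types, lifting))
    fix i x assume x: "x \<in> U"
    obtain D where "((\<lambda>t. partials is \<phi> (x + t *\<^sub>R axis i 1)) has_real_derivative D) (at 0)"
      using \<phi> x unfolding smooth_on_def real_differentiable_def by blast
    then have "((\<lambda>t. partials is \<psi> (x + t *\<^sub>R axis i 1)) has_real_derivative D) (at 0)"
      using has_real_derivative_line_cong[OF U x, of "partials is \<phi>" "partials is \<psi>"] partials_eq[of "is"]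
      by simp
    then show "(\<lambda>t. partials is \<psi> (x + t *\<^sub>R axis i 1)) differentiable at 0"
      using real_differentiable_def by blast
  qed
qed

section \<open>Mean curvature of graphs of functions of the hyperbolic distance\<close>

lemma sum_UNIV_option:
  fixes f :: "'a::finite option \<Rightarrow> 'b::comm_monoid_add"
  shows "(\<Sum>a\<in>UNIV. f a) = f None + (\<Sum>i\<in>UNIV. f (Some i))"
proof -
  have "(\<Sum>a\<in>UNIV. f a) = (\<Sum>a\<in>insert None (range Some). f a)"
    by (simp add: UNIV_option_conv[symmetric])
  also have "\<dots> = f None + (\<Sum>i\<in>UNIV. f (Some i))"
    by (simp add: sum.reindex)
  finally show ?thesis .
qed

lemma matrix_inv_eqI:
  fixes A B :: "'a::field^'n^'n"
  assumes "A ** B = mat 1"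
  shows "matrix_inv A = B"
  unfolding matrix_inv_def
proof (rule some_equality)
  show "A ** B = mat 1 \<and> B ** A = mat 1"
    using assms matrix_left_right_inverse by blast
  fix B' assume "A ** B' = mat 1 \<and> B' ** A = mat 1"
  then show "B' = B"
    by (metis assms matrix_mul_assoc matrix_mul_lid matrix_mul_rid)
qed

lemma matrix_inv_diagonal:
  fixes d :: "'n::finite \<Rightarrow> real"
  assumes "\<And>a. d a \<noteq> 0"
  shows "matrix_inv (\<chi> a b. if a = b then d a else 0) = (\<chi> a b. if a = b then 1 / d a else 0)"
proof (rule matrix_inv_eqI)
  have "(\<Sum>k\<in>UNIV. (if a = k then d a else 0) * (if k = b then 1 / d k else 0)) =
      (\<Sum>k\<in>UNIV. if k = a then (if a = b then 1 else 0) else 0)" for a b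
    by (rule sum.cong) (auto simp: assms)
  then show "(\<chi> a b. if a = b then d a else 0) ** (\<chi> a b. if a = b then 1 / d a else 0) = mat 1"
    by (simp add: matrix_matrix_mult_def mat_def vec_eq_iff)
qed

text \<open>Sherman--Morrison.\<close>
lemma matrix_inv_scalar_plus_rank_one:
  fixes v :: "real^'n"
  assumes a: "a \<noteq> 0" and ab: "a + b * (v \<bullet> v) \<noteq> 0"
  shows "matrix_inv (\<chi> i j. a * (if i = j then 1 else 0) + b * v $ i * v $ j) =
    (\<chi> i j. (if i = j then 1 else 0) / a - b / (a * (a + b * (v \<bullet> v))) * v $ i * v $ j)"
proof (rule matrix_inv_eqI)
  define c where "c = b / (a * (a + b * (v \<bullet> v)))"
  have "(\<Sum>k\<in>UNIV. (a * (if i = k then 1 else 0) + b * v $ i * v $ k) *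
      ((if k = j then 1 else 0) / a - c * v $ k * v $ j)) = (if i = j then 1 else 0)" for i j
  proof -
    have "(\<Sum>k\<in>UNIV. (a * (if i = k then 1 else 0) + b * v $ i * v $ k) *
        ((if k = j then 1 else 0) / a - c * v $ k * v $ j)) =
      (\<Sum>k\<in>UNIV. (if k = i then (if i = j then 1 else 0) - a * c * v $ i * v $ j else 0) +
        (if k = j then b / a * v $ i * v $ j else 0) - b * c * v $ i * v $ j * (v $ k * v $ k))"
      by (rule sum.cong) (auto simp: a algebra_simps)
    also have "\<dots> = (if i = j then 1 else 0) - a * c * v $ i * v $ j + b / a * v $ i * v $ j
        - b * c * v $ i * v $ j * (v \<bullet> v)"
      by (simp add: sum.distrib sum_subtractf sum_distrib_left[symmetric] inner_vec_def)
    also have "\<dots> = (if i = j then 1 else 0) + v $ i * v $ j * (b / a - c * (a + b * (v \<bullet> v)))"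
      by (simp add: algebra_simps)
    also have "c * (a + b * (v \<bullet> v)) = b / a"
      using a ab by (simp add: c_def)
    finally show ?thesis by simp
  qed
  then show "(\<chi> i j. a * (if i = j then 1 else 0) + b * v $ i * v $ j) **
      (\<chi> i j. (if i = j then 1 else 0) / a - b / (a * (a + b * (v \<bullet> v))) * v $ i * v $ j) = mat 1"
    by (simp add: matrix_matrix_mult_def mat_def vec_eq_iff c_def)
qed

lemma sum_mult_scalar_plus_rank_one:
  fixes v :: "real^'n"
  shows "(\<Sum>i\<in>UNIV. \<Sum>j\<in>UNIV. (A * (if i = j then 1 else 0) + B * v $ i * v $ j) *
      (C * (if i = j then 1 else 0) + D * v $ i * v $ j)) =
    real CARD('n) * A * C + (v \<bullet> v) * (A * D + B * C) + (v \<bullet> v)\<^sup>2 * B * D"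
proof -
  have "(\<Sum>j\<in>UNIV. (A * (if i = j then 1 else 0) + B * v $ i * v $ j) *
      (C * (if i = j then 1 else 0) + D * v $ i * v $ j)) =
    A * C + (A * D + B * C) * (v $ i * v $ i) + B * D * (v \<bullet> v) * (v $ i * v $ i)" for i
  proof -
    have "(\<Sum>j\<in>UNIV. (A * (if i = j then 1 else 0) + B * v $ i * v $ j) *
        (C * (if i = j then 1 else 0) + D * v $ i * v $ j)) =
      (\<Sum>j\<in>UNIV. (if j = i then A * C + (A * D + B * C) * (v $ i * v $ i) else 0) +
        B * D * (v $ i * v $ i) * (v $ j * v $ j))"
      by (rule sum.cong) (auto simp: algebra_simps)
    also have "\<dots> = A * C + (A * D + B * C) * (v $ i * v $ i) +
        B * D * (v $ i * v $ i) * (\<Sum>j\<in>UNIV. v $ j * v $ j)"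
      by (simp add: sum.distrib sum_distrib_left)
    finally show ?thesis
      by (simp add: inner_vec_def algebra_simps)
  qed
  then have "(\<Sum>i\<in>UNIV. \<Sum>j\<in>UNIV. (A * (if i = j then 1 else 0) + B * v $ i * v $ j) *
      (C * (if i = j then 1 else 0) + D * v $ i * v $ j)) =
    (\<Sum>i\<in>(UNIV::'n set). A * C) + (A * D + B * C) * (\<Sum>i\<in>UNIV. v $ i * v $ i) +
      B * D * (v \<bullet> v) * (\<Sum>i\<in>UNIV. v $ i * v $ i)"
    by (simp only: sum.distrib sum_distrib_left)
  then show ?thesis
    by (simp add: inner_vec_def power2_eq_square algebra_simps)
qed

lemma metric_inner_diagonal:
  assumes "\<And>a b. a \<noteq> b \<Longrightarrow> G p a b = 0"
  shows "metric_inner G p v w = (\<Sum>a\<in>UNIV. G p a a * v $ a * w $ a)"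
proof -
  have "(\<Sum>b\<in>UNIV. G p a b * v $ a * w $ b) = G p a a * v $ a * w $ a" for a
  proof -
    have "(\<Sum>b\<in>UNIV. G p a b * v $ a * w $ b) = (\<Sum>b\<in>UNIV. if b = a then G p a a * v $ a * w $ a else 0)"
      by (rule sum.cong) (auto simp: assms)
    then show ?thesis by simp
  qed
  then show ?thesis by (simp add: metric_inner_def)
qed

lemma metric_inner_scaleR_left:
  "metric_inner G p (t *\<^sub>R v) w = t * metric_inner G p v w"
  by (simp add: metric_inner_def sum_distrib_left algebra_simps)

text \<open>\<open>cosh\<close> of the hyperbolic distance from \<open>0\<close> to \<open>x\<close> (lemma \<open>cosh_hyp_r\<close>).\<close>
definition hyp_cosh :: "real^'m \<Rightarrow> real" where
  "hyp_cosh x = (1 + (norm x)\<^sup>2) / (1 - (norm x)\<^sup>2)"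

lemma norm_sq_less_one: "norm (x::real^'m) < 1 \<Longrightarrow> (norm x)\<^sup>2 < 1"
  by (simp add: abs_square_less_1)

lemma hyp_cosh_plus_one: "norm x < 1 \<Longrightarrow> hyp_cosh x + 1 = 2 / (1 - (norm x)\<^sup>2)"
  using norm_sq_less_one[of x] by (simp add: hyp_cosh_def field_simps)

lemma hyp_cosh_ge_one: "norm x < 1 \<Longrightarrow> 1 \<le> hyp_cosh x"
  using norm_sq_less_one[of x] by (simp add: hyp_cosh_def field_simps)

lemma hyp_cosh_norm_sq: "norm x < 1 \<Longrightarrow> (hyp_cosh x + 1) * (norm x)\<^sup>2 = hyp_cosh x - 1"
  using norm_sq_less_one[of x] by (simp add: hyp_cosh_def field_simps)

lemma hyp_cosh_sq_minus_one:
  assumes "norm x < 1"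
  shows "(hyp_cosh x + 1)\<^sup>2 * (norm x)\<^sup>2 = (hyp_cosh x)\<^sup>2 - 1"
proof -
  have "(hyp_cosh x + 1)\<^sup>2 * (norm x)\<^sup>2 = (hyp_cosh x + 1) * ((hyp_cosh x + 1) * (norm x)\<^sup>2)"
    by (simp add: power2_eq_square)
  also have "\<dots> = (hyp_cosh x + 1) * (hyp_cosh x - 1)"
    by (simp only: hyp_cosh_norm_sq[OF assms])
  also have "\<dots> = (hyp_cosh x)\<^sup>2 - 1"
    by (simp add: power2_eq_square algebra_simps)
  finally show ?thesis .
qed

lemma cosh_hyp_r:
  assumes "norm x < 1"
  shows "cosh (hyp_r x) = hyp_cosh x"
proof -
  define n where "n = norm x"
  have n: "0 \<le> n" "n < 1" using assms by (auto simp: n_def)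
  moreover have "n\<^sup>2 < 1" using n by (simp add: abs_square_less_1)
  ultimately have nz: "1 - n \<noteq> 0" "1 + n \<noteq> 0" "1 - n * n \<noteq> 0"
    by (auto simp: power2_eq_square)
  have "cosh (hyp_r x) = ((1 + n) / (1 - n) + (1 - n) / (1 + n)) / 2"
    using n unfolding hyp_r_def n_def[symmetric] by (simp add: cosh_ln_real inverse_eq_divide)
  also have "\<dots> = hyp_cosh x"
    using nz unfolding hyp_cosh_def n_def[symmetric] by (simp add: field_simps power2_eq_square)
  finally show ?thesis .
qed

lemma hyp_r_nonneg: "norm x < 1 \<Longrightarrow> 0 \<le> hyp_r x"
  unfolding hyp_r_def by (simp add: field_simps)

lemma has_real_derivative_line_hyp_cosh:
  assumes "norm x < 1"
  shows "((\<lambda>t. hyp_cosh (x + t *\<^sub>R axis i 1)) has_real_derivative (hyp_cosh x + 1)\<^sup>2 * x $ i) (at 0)"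
proof -
  have "((\<lambda>u. (1 + u) / (1 - u)) has_real_derivative 2 / (1 - (norm x)\<^sup>2)\<^sup>2) (at ((norm x)\<^sup>2))"
    using norm_sq_less_one[OF assms]
    by (auto intro!: derivative_eq_intros simp: field_simps power2_eq_square)
  then have "((\<lambda>t. hyp_cosh (x + t *\<^sub>R axis i 1)) has_real_derivative
      2 / (1 - (norm x)\<^sup>2)\<^sup>2 * (2 * x $ i)) (at 0)"
    unfolding hyp_cosh_def by (rule has_real_derivative_line_radial)
  moreover have "(hyp_cosh x + 1)\<^sup>2 * x $ i = 2 / (1 - (norm x)\<^sup>2)\<^sup>2 * (2 * x $ i)"
    by (simp add: hyp_cosh_plus_one[OF assms] power_divide)
  ultimately show ?thesis by simp
qed

lemma hyp_metric_eq:
  "norm x < 1 \<Longrightarrow> hyp_metric x i j = (if i = j then (hyp_cosh x + 1)\<^sup>2 else 0)"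
  by (simp add: hyp_metric_def hyp_cosh_plus_one power_divide)

lemma metric_inv_hyp_metric:
  fixes x :: "real^'m"
  assumes "norm x < 1"
  shows "metric_inv hyp_metric x k l = (if k = l then 1 / (hyp_cosh x + 1)\<^sup>2 else 0)"
proof -
  have "hyp_cosh x + 1 \<noteq> 0" using hyp_cosh_ge_one[OF assms] by simp
  then have "matrix_inv (\<chi> (a::'m) b. if a = b then (hyp_cosh x + 1)\<^sup>2 else 0) =
      (\<chi> a b. if a = b then 1 / (hyp_cosh x + 1)\<^sup>2 else 0)"
    by (intro matrix_inv_diagonal) simp
  then show ?thesis
    unfolding metric_inv_def hyp_metric_eq[OF assms] by simp
qed

lemma metric_inner_hyp_metric:
  assumes "norm x < 1"
  shows "metric_inner hyp_metric x v w = (hyp_cosh x + 1)\<^sup>2 * (v \<bullet> w)"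
  using assms
  by (simp add: metric_inner_diagonal hyp_metric_eq inner_vec_def sum_distrib_left algebra_simps)

lemma base_pt_graph_map [simp]: "base_pt (graph_map f x) = x"
  by (simp add: base_pt_def graph_map_def vec_eq_iff)

lemma graph_map_Some [simp]: "graph_map f x $ Some k = x $ k"
  and graph_map_None [simp]: "graph_map f x $ None = f x"
  by (simp_all add: graph_map_def)

lemma base_pt_line_Some: "base_pt (p + t *\<^sub>R axis (Some k) 1) = base_pt p + t *\<^sub>R axis k 1"
  and base_pt_line_None: "base_pt (p + t *\<^sub>R axis None 1) = base_pt p"
  by (simp_all add: base_pt_def vec_eq_iff axis_def)

lemma mem_graph_set_iff:
  "p \<in> graph_set f \<longleftrightarrow> base_pt p \<in> ball 0 1 \<and> p $ None = f (base_pt p)"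
proof
  assume "p \<in> graph_set f"
  then show "base_pt p \<in> ball 0 1 \<and> p $ None = f (base_pt p)"
    by (auto simp: graph_set_def)
next
  assume p: "base_pt p \<in> ball 0 1 \<and> p $ None = f (base_pt p)"
  then have "p = graph_map f (base_pt p)"
    by (auto simp: vec_eq_iff base_pt_def graph_map_def split: option.split)
  then show "p \<in> graph_set f"
    unfolding graph_set_def using p by blast
qed

lemma prod_metric_eq:
  assumes "norm (base_pt p) < 1"
  shows "prod_metric p a b =
    (if a = b then (case a of Some _ \<Rightarrow> (hyp_cosh (base_pt p) + 1)\<^sup>2 | None \<Rightarrow> 1) else 0)"
  by (simp add: prod_metric_def hyp_metric_eq[OF assms] split: option.split)

lemma metric_inv_prod_metric:
  assumes "norm (base_pt p) < 1"
  shows "metric_inv prod_metric p a b =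
    (if a = b then (case a of Some _ \<Rightarrow> 1 / (hyp_cosh (base_pt p) + 1)\<^sup>2 | None \<Rightarrow> 1) else 0)"
proof -
  have "hyp_cosh (base_pt p) + 1 \<noteq> 0" using hyp_cosh_ge_one[OF assms] by simp
  then have "matrix_inv (\<chi> a b. prod_metric p a b) =
      (\<chi> a b. if a = b then 1 / (case a of Some _ \<Rightarrow> (hyp_cosh (base_pt p) + 1)\<^sup>2 | None \<Rightarrow> 1) else 0)"
    unfolding prod_metric_eq[OF assms] by (intro matrix_inv_diagonal) (simp split: option.split)
  then show ?thesis
    by (simp add: metric_inv_def split: option.split)
qed

lemma metric_inner_prod_metric:
  assumes "norm (base_pt p) < 1"
  shows "metric_inner prod_metric p v w =
    (hyp_cosh (base_pt p) + 1)\<^sup>2 * (\<Sum>k\<in>UNIV. v $ Some k * w $ Some k) + v $ None * w $ None"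
  by (simp add: metric_inner_diagonal prod_metric_eq[OF assms] sum_UNIV_option sum_distrib_left
      algebra_simps)

lemma partial_prod_metric:
  assumes p: "norm (base_pt p) < 1"
  shows "partial (\<lambda>q. prod_metric q a b) e p =
    (case (a, b, e) of (Some i, Some j, Some k) \<Rightarrow>
       if i = j then 2 * (hyp_cosh (base_pt p) + 1) ^ 3 * base_pt p $ k else 0
     | _ \<Rightarrow> 0)"
proof (cases "\<exists>i. a = Some i \<and> b = Some i")
  case True
  then obtain i where ab: "a = Some i" "b = Some i" by blast
  define x where "x = base_pt p"
  have f: "(\<lambda>q. prod_metric q a b) = (\<lambda>q. (\<lambda>v. 4 / (1 - v)\<^sup>2) ((norm (base_pt q))\<^sup>2))"
    using ab by (simp add: prod_metric_def hyp_metric_def)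
  show ?thesis
  proof (cases e)
    case None
    then show ?thesis
      unfolding f partial_def by (simp add: ab base_pt_line_None)
  next
    case (Some k)
    have "((\<lambda>v. 4 / (1 - v)\<^sup>2) has_real_derivative 8 / (1 - (norm x)\<^sup>2) ^ 3) (at ((norm x)\<^sup>2))"
      using norm_sq_less_one[of x] p unfolding x_def
      by (auto intro!: derivative_eq_intros simp: divide_simps power2_eq_square power3_eq_cube)
    from has_real_derivative_line_radial[OF this, of k]
    have "partial (\<lambda>q. prod_metric q a b) e p = 8 / (1 - (norm x)\<^sup>2) ^ 3 * (2 * x $ k)"
      unfolding f Some by (intro partial_eqI) (simp add: base_pt_line_Some x_def)
    also have "\<dots> = 2 * (hyp_cosh x + 1) ^ 3 * x $ k"
      unfolding hyp_cosh_plus_one[OF p[folded x_def]] by (simp add: power_divide)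
    finally show ?thesis
      using ab Some by (simp add: x_def)
  qed
next
  case False
  then have "(\<lambda>q. prod_metric q a b) = (\<lambda>q. if a = None \<and> b = None then 1 else 0)"
    by (cases a; cases b) (auto simp: prod_metric_def hyp_metric_def)
  then show ?thesis
    using False by (auto simp: partial_const split: option.split)
qed

lemma christoffel_prod_metric:
  assumes p: "norm (base_pt p) < 1"
  shows "christoffel prod_metric p a b c =
    (case (a, b, c) of (Some k, Some i, Some j) \<Rightarrow>
       (hyp_cosh (base_pt p) + 1) * ((if k = j then base_pt p $ i else 0) +
         (if k = i then base_pt p $ j else 0) - (if i = j then base_pt p $ k else 0))
     | _ \<Rightarrow> 0)"
proof -
  define s where "s = hyp_cosh (base_pt p) + 1"
  have s: "s > 0" using hyp_cosh_ge_one[OF p] by (simp add: s_def)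
  define g where "g a = (case a of Some _ \<Rightarrow> s\<^sup>2 | None \<Rightarrow> 1)" for a :: "'a option"
  define D where "D l = partial (\<lambda>q. prod_metric q l c) b p + partial (\<lambda>q. prod_metric q b l) c p
    - partial (\<lambda>q. prod_metric q b c) l p" for l
  have "(\<Sum>l\<in>UNIV. metric_inv prod_metric p a l * D l) = (\<Sum>l\<in>UNIV. if l = a then D a / g a else 0)"
    by (rule sum.cong) (auto simp: metric_inv_prod_metric[OF p, folded s_def] g_def split: option.split)
  then have "christoffel prod_metric p a b c = D a / (2 * g a)"
    by (simp add: christoffel_def D_def)
  also have "\<dots> = (case (a, b, c) of (Some k, Some i, Some j) \<Rightarrow>
       s * ((if k = j then base_pt p $ i else 0) +
         (if k = i then base_pt p $ j else 0) - (if i = j then base_pt p $ k else 0))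
     | _ \<Rightarrow> 0)"
    using s
    by (auto simp: D_def g_def partial_prod_metric[OF p, folded s_def] power2_eq_square
        power3_eq_cube field_simps split: option.split)
  finally show ?thesis by (simp only: s_def)
qed

lemma has_real_derivative_line_comp_hyp_cosh:
  assumes "norm x < 1" "(h has_real_derivative h') (at (hyp_cosh x))"
  shows "((\<lambda>t. h (hyp_cosh (x + t *\<^sub>R axis i 1))) has_real_derivative
    h' * ((hyp_cosh x + 1)\<^sup>2 * x $ i)) (at 0)"
proof -
  have "(h has_real_derivative h') (at (hyp_cosh (x + 0 *\<^sub>R axis i 1)))"
    using assms(2) by simp
  from DERIV_chain2[OF this has_real_derivative_line_hyp_cosh[OF assms(1)]] show ?thesis .
qed

lemma sum_christoffel_contract:
  fixes x :: "real^'m"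
  shows "(\<Sum>k\<in>UNIV. ((if k = j then x $ i else 0) + (if k = i then x $ j else 0)
      - (if i = j then x $ k else 0)) * x $ k) = 2 * x $ i * x $ j - (if i = j then (norm x)\<^sup>2 else 0)"
proof -
  have "(\<Sum>k\<in>UNIV. ((if k = j then x $ i else 0) + (if k = i then x $ j else 0)
      - (if i = j then x $ k else 0)) * x $ k) =
    (\<Sum>k\<in>UNIV. (if k = j then x $ i * x $ j else 0) + (if k = i then x $ j * x $ i else 0)
      - (if i = j then 1 else 0) * (x $ k * x $ k))"
    by (rule sum.cong) auto
  also have "\<dots> = 2 * x $ i * x $ j - (if i = j then 1 else 0) * (x \<bullet> x)"
    by (simp add: sum.distrib sum_subtractf sum_distrib_left[symmetric] inner_vec_def)
  finally show ?thesis by (simp add: power2_norm_eq_inner)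
qed

lemma sum_sum_option_delta:
  fixes C :: "'m::finite option \<Rightarrow> 'm option \<Rightarrow> real"
  assumes "\<And>c. C None c = 0" "\<And>b. C b None = 0"
  shows "(\<Sum>b\<in>UNIV. \<Sum>c\<in>UNIV. C b c * (case b of Some k \<Rightarrow> if k = i then 1 else 0 | None \<Rightarrow> s)
      * (case c of Some k \<Rightarrow> if k = j then 1 else 0 | None \<Rightarrow> t)) = C (Some i) (Some j)"
proof -
  have "(\<Sum>l\<in>UNIV. C (Some k) (Some l) * (if k = i then 1 else 0) * (if l = j then 1 else 0)) =
      (if k = i then C (Some i) (Some j) else 0)" for k
  proof -
    have "(\<Sum>l\<in>UNIV. C (Some k) (Some l) * (if k = i then 1 else 0) * (if l = j then 1 else 0)) =
        (\<Sum>l\<in>UNIV. if l = j then (if k = i then C (Some i) (Some j) else 0) else 0)"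
      by (rule sum.cong) auto
    then show ?thesis by simp
  qed
  then show ?thesis
    by (simp add: sum_UNIV_option assms)
qed

text \<open>\<open>m\<langle>H, \<nu>\<rangle>\<close> for the graph of \<open>P (cosh r)\<close>, at a point with \<open>cosh r = \<sigma>\<close>,
  \<open>P'(\<sigma>) = \<phi>\<close> and \<open>P''(\<sigma>) = \<phi>'\<close>.\<close>
definition radial_mean_curvature :: "real \<Rightarrow> real \<Rightarrow> real \<Rightarrow> real \<Rightarrow> real" where
  "radial_mean_curvature m \<sigma> \<phi> \<phi>' =
    ((m - 1) * \<sigma> * \<phi> + (\<sigma> * \<phi> + (\<sigma>\<^sup>2 - 1) * \<phi>') / (1 + (\<sigma>\<^sup>2 - 1) * \<phi>\<^sup>2))
      / sqrt (1 + (\<sigma>\<^sup>2 - 1) * \<phi>\<^sup>2)"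

text \<open>\<open>A \<delta> + B x x\<^sup>T\<close> is the inverse induced metric and \<open>C \<delta> + D x x\<^sup>T\<close> the second fundamental
  form of a radial graph, with \<open>u = |x|\<^sup>2\<close>; the left-hand side is their full contraction.\<close>
lemma radial_mean_curvature_eq_trace:
  fixes m \<sigma> u W \<phi> \<phi>' :: real
  assumes \<sigma>: "1 \<le> \<sigma>" and u: "(\<sigma> + 1)\<^sup>2 * u = \<sigma>\<^sup>2 - 1"
    and W: "W = sqrt (1 + (\<sigma>\<^sup>2 - 1) * \<phi>\<^sup>2)"
  defines "A \<equiv> 1 / (\<sigma> + 1)\<^sup>2" and "B \<equiv> - (\<phi>\<^sup>2 / (1 + (\<sigma>\<^sup>2 - 1) * \<phi>\<^sup>2))"
    and "C \<equiv> (\<sigma> + 1)\<^sup>2 * \<sigma> * \<phi> / W" and "D \<equiv> (\<sigma> + 1) ^ 4 * \<phi>' / W"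
  shows "m * A * C + u * (A * D + B * C) + u\<^sup>2 * B * D = radial_mean_curvature m \<sigma> \<phi> \<phi>'"
proof -
  define s where "s = \<sigma>\<^sup>2 - 1"
  define Q where "Q = 1 + s * \<phi>\<^sup>2"
  have "0 \<le> s" using \<sigma> by (simp add: s_def one_le_power)
  then have Q: "0 < Q" by (simp add: Q_def add_pos_nonneg)
  have W0: "W \<noteq> 0" using Q by (simp add: W Q_def s_def)
  have \<sigma>1: "\<sigma> + 1 \<noteq> 0" using \<sigma> by simp
  have u': "u = s / (\<sigma> + 1)\<^sup>2"
    using u \<sigma>1 by (simp add: s_def field_simps)
  have "m * A * C + u * (A * D + B * C) + u\<^sup>2 * B * D =
      m * \<sigma> * \<phi> / W + s * \<phi>' / W - s * \<sigma> * \<phi> ^ 3 / (Q * W) - s\<^sup>2 * \<phi>\<^sup>2 * \<phi>' / (Q * W)"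
    unfolding A_def B_def C_def D_def u' s_def[symmetric] Q_def[symmetric]
    using \<sigma>1 Q W0 by (simp add: field_simps) algebra
  also have "\<dots> = ((m - 1) * \<sigma> * \<phi> + (\<sigma> * \<phi> + s * \<phi>') / Q) / W"
    using Q W0 by (simp add: field_simps) (simp add: Q_def algebra_simps power2_eq_square power3_eq_cube)
  finally show ?thesis
    by (simp add: radial_mean_curvature_def W s_def Q_def)
qed

locale radial_graph =
  fixes F :: "real^'m::finite \<Rightarrow> real" and P \<phi> \<phi>' :: "real \<Rightarrow> real" and d :: real
  assumes F_eq: "\<And>y. norm y < 1 \<Longrightarrow> F y = P (hyp_cosh y) + d"
    and P_deriv: "\<And>\<sigma>. 1 \<le> \<sigma> \<Longrightarrow> (P has_real_derivative \<phi> \<sigma>) (at \<sigma>)"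
    and slope_deriv: "\<And>\<sigma>. 1 \<le> \<sigma> \<Longrightarrow> (\<phi> has_real_derivative \<phi>' \<sigma>) (at \<sigma>)"
begin

lemma partial_F:
  assumes x: "norm x < 1"
  shows "partial F k x = (hyp_cosh x + 1)\<^sup>2 * \<phi> (hyp_cosh x) * x $ k"
proof -
  have "partial F k x = partial (\<lambda>y. P (hyp_cosh y) + d) k x"
    by (rule partial_cong[of "ball 0 1"]) (use x F_eq in auto)
  also have "\<dots> = \<phi> (hyp_cosh x) * ((hyp_cosh x + 1)\<^sup>2 * x $ k) + 0"
    using x hyp_cosh_ge_one[OF x]
    by (intro partial_eqI DERIV_add[OF _ DERIV_const] has_real_derivative_line_comp_hyp_cosh P_deriv)
  finally show ?thesis by simp
qed

lemma partial_partial_F: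
  assumes x: "norm x < 1"
  shows "partial (\<lambda>y. partial F j y) i x =
    (hyp_cosh x + 1)\<^sup>2 * \<phi> (hyp_cosh x) * (if i = j then 1 else 0) +
    ((hyp_cosh x + 1) ^ 4 * \<phi>' (hyp_cosh x) + 2 * (hyp_cosh x + 1) ^ 3 * \<phi> (hyp_cosh x)) * x $ i * x $ j"
proof -
  define \<sigma> where "\<sigma> = hyp_cosh x"
  have "partial (\<lambda>y. partial F j y) i x = partial (\<lambda>y. (hyp_cosh y + 1)\<^sup>2 * \<phi> (hyp_cosh y) * y $ j) i x"
    by (rule partial_cong[of "ball 0 1"]) (use x partial_F in auto)
  also have "\<dots> = (hyp_cosh x + 1)\<^sup>2 * \<phi> (hyp_cosh x) * (if i = j then 1 else 0) +
    ((hyp_cosh x + 1) ^ 4 * \<phi>' (hyp_cosh x) + 2 * (hyp_cosh x + 1) ^ 3 * \<phi> (hyp_cosh x)) * x $ i * x $ j"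
  proof (rule partial_eqI)
    have d1: "((\<lambda>t. (hyp_cosh (x + t *\<^sub>R axis i 1) + 1)\<^sup>2) has_real_derivative
        (2 * (\<sigma> + 1)) * ((\<sigma> + 1)\<^sup>2 * x $ i)) (at 0)"
      unfolding \<sigma>_def
      by (rule has_real_derivative_line_comp_hyp_cosh[OF x, of "\<lambda>s. (s + 1)\<^sup>2"])
        (auto intro!: derivative_eq_intros)
    have d2: "((\<lambda>t. \<phi> (hyp_cosh (x + t *\<^sub>R axis i 1))) has_real_derivative
        \<phi>' \<sigma> * ((\<sigma> + 1)\<^sup>2 * x $ i)) (at 0)"
      unfolding \<sigma>_def
      by (rule has_real_derivative_line_comp_hyp_cosh[OF x slope_deriv[OF hyp_cosh_ge_one[OF x]]])
    show "((\<lambda>t. (hyp_cosh (x + t *\<^sub>R axis i 1) + 1)\<^sup>2 * \<phi> (hyp_cosh (x + t *\<^sub>R axis i 1)) *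
        (x + t *\<^sub>R axis i 1) $ j) has_real_derivative
        (hyp_cosh x + 1)\<^sup>2 * \<phi> (hyp_cosh x) * (if i = j then 1 else 0) +
        ((hyp_cosh x + 1) ^ 4 * \<phi>' (hyp_cosh x) + 2 * (hyp_cosh x + 1) ^ 3 * \<phi> (hyp_cosh x)) *
        x $ i * x $ j) (at 0)"
      using DERIV_mult[OF DERIV_mult[OF d1 d2] has_real_derivative_line_coord[of x i j]]
      by (cases "i = j") (simp_all add: \<sigma>_def algebra_simps eval_nat_numeral)
  qed
  finally show ?thesis .
qed

lemma dgraph_eq:
  assumes "norm x < 1"
  shows "dgraph F i x = (\<chi> a. case a of Some k \<Rightarrow> if k = i then 1 else 0
    | None \<Rightarrow> (hyp_cosh x + 1)\<^sup>2 * \<phi> (hyp_cosh x) * x $ i)"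
  using assms by (auto simp: vec_eq_iff dgraph_def partial_coord partial_F split: option.split)

lemma ddgraph_eq:
  assumes "norm x < 1"
  shows "ddgraph F i j x = (\<chi> a. case a of Some k \<Rightarrow> 0 | None \<Rightarrow> partial (\<lambda>y. partial F j y) i x)"
proof -
  have "partial (\<lambda>z. z $ k) j = (\<lambda>y. if k = j then 1 else 0)" for k :: 'm
    using partial_coord by blast
  then show ?thesis
    by (auto simp: vec_eq_iff ddgraph_def partial_const split: option.split)
qed

lemma hyp_grad_eq:
  assumes x: "norm x < 1"
  shows "hyp_grad F x = \<phi> (hyp_cosh x) *\<^sub>R x"
proof -
  have "hyp_cosh x + 1 \<noteq> 0" using hyp_cosh_ge_one[OF x] by simp
  then have "(\<Sum>l\<in>UNIV. metric_inv hyp_metric x k l * partial F l x) =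
      (\<Sum>l\<in>UNIV. if l = k then \<phi> (hyp_cosh x) * x $ k else 0)" for k
    by (intro sum.cong) (auto simp: metric_inv_hyp_metric[OF x] partial_F[OF x])
  then show ?thesis
    by (simp add: hyp_grad_def vec_eq_iff)
qed

lemma hyp_grad_norm_sq:
  assumes x: "norm x < 1"
  shows "(hyp_grad_norm F x)\<^sup>2 = ((hyp_cosh x)\<^sup>2 - 1) * (\<phi> (hyp_cosh x))\<^sup>2"
proof -
  have "metric_inner hyp_metric x (hyp_grad F x) (hyp_grad F x) =
      ((hyp_cosh x + 1)\<^sup>2 * (norm x)\<^sup>2) * (\<phi> (hyp_cosh x))\<^sup>2"
    by (simp add: metric_inner_hyp_metric[OF x] hyp_grad_eq[OF x] dot_square_norm power2_eq_square)
  also have "\<dots> = ((hyp_cosh x)\<^sup>2 - 1) * (\<phi> (hyp_cosh x))\<^sup>2"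
    by (simp only: hyp_cosh_sq_minus_one[OF x])
  finally show ?thesis
    using hyp_cosh_ge_one[OF x] by (simp add: hyp_grad_norm_def)
qed

lemma graph_normal_eq:
  assumes x: "norm x < 1"
  shows "graph_normal F x = (1 / sqrt (1 + ((hyp_cosh x)\<^sup>2 - 1) * (\<phi> (hyp_cosh x))\<^sup>2)) *\<^sub>R
    (\<chi> a. case a of Some k \<Rightarrow> - (\<phi> (hyp_cosh x) * x $ k) | None \<Rightarrow> 1)"
  unfolding graph_normal_def hyp_grad_norm_sq[OF x] hyp_grad_eq[OF x] by simp

lemma graph_normal_factor_pos:
  assumes x: "norm x < 1"
  shows "0 < 1 + ((hyp_cosh x)\<^sup>2 - 1) * (\<phi> (hyp_cosh x))\<^sup>2"
proof -
  have "0 \<le> (hyp_cosh x)\<^sup>2 - 1"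
    using hyp_cosh_ge_one[OF x] by (simp add: one_le_power)
  then show ?thesis by (simp add: add_pos_nonneg)
qed

lemma graph_normal_unit:
  assumes x: "norm x < 1"
  shows "metric_inner prod_metric (graph_map F x) (graph_normal F x) (graph_normal F x) = 1"
proof -
  define \<sigma> where "\<sigma> = hyp_cosh x"
  define Q where "Q = 1 + (\<sigma>\<^sup>2 - 1) * (\<phi> \<sigma>)\<^sup>2"
  have Q: "0 < Q" using graph_normal_factor_pos[OF x] by (simp add: Q_def \<sigma>_def)
  then have sqrt_Q: "sqrt Q * sqrt Q = Q" by simp
  have sum_eq: "(\<Sum>k\<in>UNIV. (\<phi> \<sigma> * x $ k) * (\<phi> \<sigma> * x $ k)) = (\<phi> \<sigma>)\<^sup>2 * (x \<bullet> x)"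
    by (simp add: inner_vec_def sum_distrib_left power2_eq_square algebra_simps)
  have "(\<sigma> + 1)\<^sup>2 * ((\<phi> \<sigma>)\<^sup>2 * (x \<bullet> x)) = ((\<sigma> + 1)\<^sup>2 * (norm x)\<^sup>2) * (\<phi> \<sigma>)\<^sup>2"
    by (simp add: dot_square_norm algebra_simps)
  also have "\<dots> = (\<sigma>\<^sup>2 - 1) * (\<phi> \<sigma>)\<^sup>2"
    by (simp only: hyp_cosh_sq_minus_one[OF x, folded \<sigma>_def])
  finally have tangential: "(\<sigma> + 1)\<^sup>2 * ((\<phi> \<sigma>)\<^sup>2 * (x \<bullet> x)) = Q - 1"
    by (simp add: Q_def)
  have "metric_inner prod_metric (graph_map F x) (graph_normal F x) (graph_normal F x) =
      (\<sigma> + 1)\<^sup>2 * ((\<Sum>k\<in>UNIV. (\<phi> \<sigma> * x $ k) * (\<phi> \<sigma> * x $ k)) / (sqrt Q * sqrt Q))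
        + 1 / (sqrt Q * sqrt Q)"
    using x by (simp add: metric_inner_prod_metric graph_normal_eq \<sigma>_def Q_def sum_divide_distrib)
  also have "\<dots> = ((\<sigma> + 1)\<^sup>2 * ((\<phi> \<sigma>)\<^sup>2 * (x \<bullet> x)) + 1) / Q"
    unfolding sum_eq sqrt_Q by (simp add: add_divide_distrib)
  finally show ?thesis
    using Q by (simp add: tangential)
qed

lemma ind_metric_eq:
  assumes x: "norm x < 1"
  shows "ind_metric F x i j = (hyp_cosh x + 1)\<^sup>2 * (if i = j then 1 else 0) +
    ((hyp_cosh x + 1)\<^sup>2 * \<phi> (hyp_cosh x))\<^sup>2 * x $ i * x $ j"
proof -
  have "(\<Sum>k\<in>UNIV. (if k = i then 1 else 0) * (if k = j then 1 else 0)) =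
      (\<Sum>k\<in>UNIV. if k = i then (if i = j then 1 else 0) else (0::real))"
    by (rule sum.cong) auto
  then show ?thesis
    using x
    by (simp add: ind_metric_def metric_inner_prod_metric dgraph_eq power2_eq_square algebra_simps)
qed

lemma metric_inv_ind_metric:
  assumes x: "norm x < 1"
  shows "metric_inv (ind_metric F) x i j = 1 / (hyp_cosh x + 1)\<^sup>2 * (if i = j then 1 else 0) -
    (\<phi> (hyp_cosh x))\<^sup>2 / (1 + ((hyp_cosh x)\<^sup>2 - 1) * (\<phi> (hyp_cosh x))\<^sup>2) * x $ i * x $ j"
proof -
  define \<sigma> where "\<sigma> = hyp_cosh x"
  define a where "a = (\<sigma> + 1)\<^sup>2"
  define b where "b = ((\<sigma> + 1)\<^sup>2 * \<phi> \<sigma>)\<^sup>2"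
  define Q where "Q = 1 + (\<sigma>\<^sup>2 - 1) * (\<phi> \<sigma>)\<^sup>2"
  have a: "a \<noteq> 0" using hyp_cosh_ge_one[OF x] by (simp add: a_def \<sigma>_def)
  have Q: "Q \<noteq> 0" using graph_normal_factor_pos[OF x] by (simp add: Q_def \<sigma>_def)
  have "b * (x \<bullet> x) = ((\<sigma> + 1)\<^sup>2 * (norm x)\<^sup>2) * ((\<sigma> + 1)\<^sup>2 * (\<phi> \<sigma>)\<^sup>2)"
    by (simp add: b_def dot_square_norm power_mult_distrib algebra_simps)
  also have "\<dots> = (\<sigma>\<^sup>2 - 1) * ((\<sigma> + 1)\<^sup>2 * (\<phi> \<sigma>)\<^sup>2)"
    by (simp only: hyp_cosh_sq_minus_one[OF x, folded \<sigma>_def])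
  finally have abQ: "a + b * (x \<bullet> x) = a * Q"
    by (simp add: a_def Q_def algebra_simps)
  have ind: "(\<chi> i j. ind_metric F x i j) = (\<chi> i j. a * (if i = j then 1 else 0) + b * x $ i * x $ j)"
    by (simp add: ind_metric_eq[OF x] a_def b_def \<sigma>_def)
  have "a + b * (x \<bullet> x) \<noteq> 0"
    using a Q by (simp add: abQ)
  from matrix_inv_scalar_plus_rank_one[OF a this]
  have "metric_inv (ind_metric F) x i j =
      (if i = j then 1 else 0) / a - b / (a * (a + b * (x \<bullet> x))) * x $ i * x $ j"
    by (simp add: metric_inv_def ind)
  also have "b / (a * (a + b * (x \<bullet> x))) = (\<phi> \<sigma>)\<^sup>2 / Q"
  proof -
    have "b = a * a * (\<phi> \<sigma>)\<^sup>2" by (simp add: a_def b_def power_mult_distrib power2_eq_square)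
    then show ?thesis unfolding abQ using a Q by simp
  qed
  finally show ?thesis
    by (simp add: a_def Q_def \<sigma>_def)
qed

lemma amb_cov_eq:
  assumes x: "norm x < 1"
  shows "amb_cov F i j x = (\<chi> a. case a of
      Some k \<Rightarrow> (hyp_cosh x + 1) * ((if k = j then x $ i else 0) + (if k = i then x $ j else 0)
        - (if i = j then x $ k else 0))
    | None \<Rightarrow> partial (\<lambda>y. partial F j y) i x)"
proof -
  have "(\<Sum>b\<in>UNIV. \<Sum>c\<in>UNIV. christoffel prod_metric (graph_map F x) a b c
      * dgraph F i x $ b * dgraph F j x $ c) = christoffel prod_metric (graph_map F x) a (Some i) (Some j)"
    for a
    unfolding dgraph_eq[OF x] vec_lambda_beta
    by (rule sum_sum_option_delta) (simp_all add: christoffel_prod_metric x split: option.split)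
  then show ?thesis
    using x by (simp add: amb_cov_def vec_eq_iff ddgraph_eq christoffel_prod_metric split: option.split)
qed

lemma sff_coeff_eq:
  assumes x: "norm x < 1"
  shows "metric_inner prod_metric (graph_map F x) (amb_cov F i j x) (graph_normal F x) =
    (hyp_cosh x + 1)\<^sup>2 * (hyp_cosh x * \<phi> (hyp_cosh x) * (if i = j then 1 else 0) +
      (hyp_cosh x + 1)\<^sup>2 * \<phi>' (hyp_cosh x) * x $ i * x $ j)
    / sqrt (1 + ((hyp_cosh x)\<^sup>2 - 1) * (\<phi> (hyp_cosh x))\<^sup>2)"
proof -
  define \<sigma> where "\<sigma> = hyp_cosh x"
  define W where "W = sqrt (1 + (\<sigma>\<^sup>2 - 1) * (\<phi> \<sigma>)\<^sup>2)"
  define c where "c k = (if k = j then x $ i else 0) + (if k = i then x $ j else 0)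
    - (if i = j then x $ k else 0)" for k
  have W: "W \<noteq> 0" using graph_normal_factor_pos[OF x] by (simp add: W_def \<sigma>_def)
  have "metric_inner prod_metric (graph_map F x) (amb_cov F i j x) (graph_normal F x) =
      (\<sigma> + 1)\<^sup>2 * (\<Sum>k\<in>UNIV. (\<sigma> + 1) * c k * (- (\<phi> \<sigma> * x $ k) / W))
        + partial (\<lambda>y. partial F j y) i x * (1 / W)"
    using x by (simp add: metric_inner_prod_metric amb_cov_eq graph_normal_eq \<sigma>_def W_def c_def)
  also have "(\<Sum>k\<in>UNIV. (\<sigma> + 1) * c k * (- (\<phi> \<sigma> * x $ k) / W)) =
      - ((\<sigma> + 1) * \<phi> \<sigma> / W) * (\<Sum>k\<in>UNIV. c k * x $ k)"
    by (simp add: sum_distrib_left sum_divide_distrib sum_negf algebra_simps)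
  also have "(\<Sum>k\<in>UNIV. c k * x $ k) = 2 * x $ i * x $ j - (if i = j then (norm x)\<^sup>2 else 0)"
    unfolding c_def by (rule sum_christoffel_contract)
  also have "(\<sigma> + 1)\<^sup>2 * (- ((\<sigma> + 1) * \<phi> \<sigma> / W) *
      (2 * x $ i * x $ j - (if i = j then (norm x)\<^sup>2 else 0))) + partial (\<lambda>y. partial F j y) i x * (1 / W) =
    ((\<sigma> + 1)\<^sup>2 * \<phi> \<sigma> * (if i = j then 1 else 0) * (1 + (\<sigma> + 1) * (norm x)\<^sup>2) +
      (\<sigma> + 1) ^ 4 * \<phi>' \<sigma> * x $ i * x $ j) / W"
    unfolding partial_partial_F[OF x] \<sigma>_def[symmetric]
    using W by (cases "i = j") (simp_all add: field_simps eval_nat_numeral)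
  also have "1 + (\<sigma> + 1) * (norm x)\<^sup>2 = \<sigma>"
    using hyp_cosh_norm_sq[OF x] by (simp add: \<sigma>_def)
  finally show ?thesis
    by (simp add: \<sigma>_def W_def eval_nat_numeral algebra_simps)
qed

lemma mean_curvature_eq:
  assumes x: "norm x < 1"
  shows "real CARD('m) * metric_inner prod_metric (graph_map F x) (mean_curv_vec F x) (graph_normal F x) =
    radial_mean_curvature (real CARD('m)) (hyp_cosh x) (\<phi> (hyp_cosh x)) (\<phi>' (hyp_cosh x))"
proof -
  define \<sigma> where "\<sigma> = hyp_cosh x"
  define W where "W = sqrt (1 + (\<sigma>\<^sup>2 - 1) * (\<phi> \<sigma>)\<^sup>2)"
  define h where "h i j = metric_inner prod_metric (graph_map F x) (amb_cov F i j x) (graph_normal F x)"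
    for i j
  define S where "S = (\<Sum>i\<in>UNIV. \<Sum>j\<in>UNIV. metric_inv (ind_metric F) x i j * h i j)"
  have "mean_curv_vec F x = (S / real CARD('m)) *\<^sub>R graph_normal F x"
    by (simp add: mean_curv_vec_def sff_def h_def S_def scaleR_sum_left[symmetric])
  then have "real CARD('m) * metric_inner prod_metric (graph_map F x) (mean_curv_vec F x) (graph_normal F x)
      = S"
    by (simp add: metric_inner_scaleR_left graph_normal_unit[OF x])
  also have "S = (\<Sum>i\<in>UNIV. \<Sum>j\<in>UNIV.
      (1 / (\<sigma> + 1)\<^sup>2 * (if i = j then 1 else 0) +
        - ((\<phi> \<sigma>)\<^sup>2 / (1 + (\<sigma>\<^sup>2 - 1) * (\<phi> \<sigma>)\<^sup>2)) * x $ i * x $ j) *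
      ((\<sigma> + 1)\<^sup>2 * \<sigma> * \<phi> \<sigma> / W * (if i = j then 1 else 0) +
        (\<sigma> + 1) ^ 4 * \<phi>' \<sigma> / W * x $ i * x $ j))"
    unfolding S_def h_def
    by (intro sum.cong refl)
      (simp add: metric_inv_ind_metric[OF x] sff_coeff_eq[OF x] \<sigma>_def W_def add_divide_distrib
        power2_eq_square power4_eq_xxxx algebra_simps)
  also have "\<dots> = radial_mean_curvature (real CARD('m)) \<sigma> (\<phi> \<sigma>) (\<phi>' \<sigma>)"
    unfolding sum_mult_scalar_plus_rank_one dot_square_norm
    by (rule radial_mean_curvature_eq_trace)
      (use hyp_cosh_ge_one[OF x] hyp_cosh_sq_minus_one[OF x] in \<open>simp_all add: \<sigma>_def W_def\<close>)
  finally show ?thesis by (simp add: \<sigma>_def)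
qed

end

section \<open>The volume ratio\<close>

lemma two_plus_mult_pos:
  fixes \<sigma> \<tau> :: real
  assumes "-1 < \<sigma>" "0 \<le> \<tau>" "\<tau> \<le> 1"
  shows "0 < 2 + (\<sigma> - 1) * \<tau>"
proof (cases "1 \<le> \<sigma>")
  case True
  then show ?thesis using assms by (simp add: add_pos_nonneg)
next
  case False
  then have "0 \<le> (\<sigma> - 1) * (\<tau> - 1)" using assms by (intro mult_nonpos_nonpos) auto
  then show ?thesis using assms by (simp add: algebra_simps)
qed

text \<open>\<open>kernel_moment m 1 0 \<sigma> = \<integral>\<^sub>0\<^sup>1 \<tau>\<^bsup>(m-2)/2\<^esup> (2 + (\<sigma> - 1) \<tau>)\<^bsup>(m-2)/2\<^esup> d\<tau>\<close>;
  the parameters \<open>C\<close> and \<open>n\<close> make the family closed under \<open>d/d\<sigma>\<close>.\<close>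
definition kernel_moment :: "nat \<Rightarrow> real \<Rightarrow> nat \<Rightarrow> real \<Rightarrow> real" where
  "kernel_moment m C n \<sigma> = integral {0..1} (\<lambda>\<tau>.
     C * (sqrt \<tau> ^ (m - 2) * \<tau> ^ n) * (2 + (\<sigma> - 1) * \<tau>) powr ((real m - 2) / 2 - real n))"

lemma has_real_derivative_kernel_moment:
  assumes "-1 < \<sigma>"
  shows "(kernel_moment m C n has_real_derivative
    kernel_moment m (C * ((real m - 2) / 2 - real n)) (Suc n) \<sigma>) (at \<sigma>)"
proof -
  define p where "p = (real m - 2) / 2"
  let ?U = "{-1<..} :: real set"
  let ?f = "\<lambda>\<sigma> \<tau>. C * (sqrt \<tau> ^ (m - 2) * \<tau> ^ n) * (2 + (\<sigma> - 1) * \<tau>) powr (p - real n)"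
  let ?f\<sigma> = "\<lambda>\<sigma> \<tau>. (C * (p - real n)) * (sqrt \<tau> ^ (m - 2) * \<tau> ^ Suc n) *
    (2 + (\<sigma> - 1) * \<tau>) powr (p - real (Suc n))"
  have "((\<lambda>\<sigma>. integral (cbox 0 1) (?f \<sigma>)) has_field_derivative integral (cbox 0 1) (?f\<sigma> \<sigma>))
      (at \<sigma> within ?U)"
  proof (rule leibniz_rule_field_derivative)
    fix s t assume s: "s \<in> ?U" and t: "t \<in> cbox (0::real) 1"
    have "0 < 2 + (s - 1) * t" using two_plus_mult_pos s t by auto
    then have "((\<lambda>\<sigma>. ?f \<sigma> t) has_real_derivative
        C * (sqrt t ^ (m - 2) * t ^ n) * ((p - real n) * (2 + (s - 1) * t) powr (p - real n - 1) * t)) (at s)"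
      by (auto intro!: derivative_eq_intros)
    then show "((\<lambda>\<sigma>. ?f \<sigma> t) has_field_derivative ?f\<sigma> s t) (at s within ?U)"
      by (simp add: has_field_derivative_at_within algebra_simps)
  next
    fix s assume "s \<in> ?U"
    then have "\<forall>t\<in>{0..1}. 2 + (s - 1) * t \<noteq> 0" using two_plus_mult_pos by force
    then have "continuous_on {0..1} (?f s)"
      by (auto intro!: continuous_intros)
    then show "?f s integrable_on cbox 0 1" by (simp add: integrable_continuous_interval)
  next
    show "continuous_on (?U \<times> cbox 0 1) (\<lambda>(s, t). ?f\<sigma> s t)"
      using two_plus_mult_pos
      by (auto intro!: continuous_intros simp: split_beta) (metis order_less_irrefl)
  qed (use assms in auto)
  then show ?thesis
    by (simp add: kernel_moment_def[abs_def] p_def at_within_open[of _ ?U] assms)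
qed

lemma smooth_real_on_kernel_moment: "smooth_real_on {-1<..} (kernel_moment m C n)"
proof (rule smooth_real_onI)
  show "deriv_closed {-1<..} {kernel_moment m C n | C n. True}"
    unfolding deriv_closed_def using has_real_derivative_kernel_moment by fastforce
qed blast

text \<open>By lemma \<open>sinh_power_integral_eq\<close>, \<open>vol_ratio m (cosh s)\<close> is
  \<open>(\<integral>\<^sub>0\<^sup>s sinh\<^bsup>m-1\<^esup>) / sinh\<^sup>m s\<close>; the kernel form shows that it is smooth across \<open>s = 0\<close>.\<close>
definition vol_ratio :: "nat \<Rightarrow> real \<Rightarrow> real" where
  "vol_ratio m \<sigma> = kernel_moment m 1 0 \<sigma> * (\<sigma> + 1) powr (- (real m / 2))"

lemma smooth_real_on_vol_ratio: "smooth_real_on {-1<..} (vol_ratio m)"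
  unfolding vol_ratio_def[abs_def]
  by (intro smooth_real_on_mult smooth_real_on_kernel_moment
      smooth_real_on_compose[OF smooth_real_on_powr smooth_real_on_add[OF smooth_real_on_id smooth_real_on_const]])
    auto

lemma sqrt_power_eq_powr:
  fixes w :: real
  assumes "0 < w"
  shows "sqrt w ^ k = w powr (real k / 2)"
proof -
  have "sqrt w ^ k = (w powr (1/2)) ^ k" using assms by (simp add: powr_half_sqrt)
  also have "\<dots> = w powr (real k * (1/2))" using assms by (simp add: powr_power)
  finally show ?thesis by simp
qed

text \<open>\<open>sinh\<^bsup>m-1\<^esup> t dt = cosh_density m \<sigma> d\<sigma>\<close> under \<open>\<sigma> = cosh t\<close>.\<close>
definition cosh_density :: "nat \<Rightarrow> real \<Rightarrow> real" where
  "cosh_density m \<sigma> = sqrt (\<sigma>\<^sup>2 - 1) ^ (m - 2)"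

lemma continuous_on_cosh_density: "continuous_on S (cosh_density m)"
  unfolding cosh_density_def[abs_def] by (intro continuous_intros)

lemma cosh_density_cosh:
  assumes m: "2 \<le> m" and t: "0 \<le> t"
  shows "cosh_density m (cosh t) * sinh t = sinh t ^ (m - 1)"
proof -
  have "sqrt ((cosh t)\<^sup>2 - 1) = sinh t"
    using t by (simp add: sinh_square_eq[symmetric])
  then have "cosh_density m (cosh t) * sinh t = sinh t ^ (m - 2) * sinh t"
    by (simp add: cosh_density_def)
  also have "\<dots> = sinh t ^ (m - 1)"
    using m by (simp add: power_Suc2[symmetric] Suc_diff_Suc numeral_2_eq_2)
  finally show ?thesis .
qed

lemma has_integral_rescale_unit_interval:
  fixes f :: "real \<Rightarrow> real"
  assumes f: "(f has_integral I) {a..b}" and ab: "a < b"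
  shows "((\<lambda>\<tau>. f ((b - a) * \<tau> + a)) has_integral I / (b - a)) {0..1}"
proof -
  have "(\<lambda>x. (1 / (b - a)) * x + - (1 / (b - a) * a)) ` {a..b} =
      {(1 / (b - a)) * a + - (1 / (b - a) * a) .. (1 / (b - a)) * b + - (1 / (b - a) * a)}"
    by (subst image_affinity_atLeastAtMost) (use ab in auto)
  also have "\<dots> = {0..1}"
    using ab by (simp add: diff_divide_distrib[symmetric])
  finally show ?thesis
    using has_integral_affinity[of f I a b "b - a" a] f ab by (simp add: cbox_interval)
qed

lemma cosh_density_affine:
  assumes m: "2 \<le> m" and \<rho>: "1 < \<rho>" and \<tau>: "0 \<le> \<tau>" "\<tau> \<le> 1"
  shows "cosh_density m ((\<rho> - 1) * \<tau> + 1) =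
    sqrt (\<rho> - 1) ^ (m - 2) * (sqrt \<tau> ^ (m - 2) * (2 + (\<rho> - 1) * \<tau>) powr ((real m - 2) / 2))"
proof -
  have w: "0 < 2 + (\<rho> - 1) * \<tau>" using two_plus_mult_pos[of \<rho> \<tau>] \<rho> \<tau> by simp
  have "((\<rho> - 1) * \<tau> + 1)\<^sup>2 - 1 = (\<rho> - 1) * \<tau> * (2 + (\<rho> - 1) * \<tau>)"
    by (simp add: algebra_simps power2_eq_square)
  then have "cosh_density m ((\<rho> - 1) * \<tau> + 1) =
      sqrt (\<rho> - 1) ^ (m - 2) * sqrt \<tau> ^ (m - 2) * sqrt (2 + (\<rho> - 1) * \<tau>) ^ (m - 2)"
    by (simp add: cosh_density_def real_sqrt_mult power_mult_distrib)
  also have "sqrt (2 + (\<rho> - 1) * \<tau>) ^ (m - 2) = (2 + (\<rho> - 1) * \<tau>) powr ((real m - 2) / 2)"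
    using sqrt_power_eq_powr[OF w, of "m - 2"] m by (simp add: of_nat_diff)
  finally show ?thesis by simp
qed

lemma integral_cosh_density:
  assumes m: "2 \<le> m" and \<rho>: "1 < \<rho>"
  shows "integral {1..\<rho>} (cosh_density m) = sqrt (\<rho> - 1) ^ m * kernel_moment m 1 0 \<rho>"
proof -
  define I where "I = integral {1..\<rho>} (cosh_density m)"
  have "(cosh_density m has_integral I) {1..\<rho>}"
    unfolding I_def by (intro integrable_integral integrable_continuous_interval continuous_on_cosh_density)
  from has_integral_rescale_unit_interval[OF this \<rho>]
  have rescaled: "((\<lambda>\<tau>. cosh_density m ((\<rho> - 1) * \<tau> + 1)) has_integral I / (\<rho> - 1)) {0..1}" .
  have "continuous_on {0..1} (\<lambda>\<tau>. sqrt \<tau> ^ (m - 2) * (2 + (\<rho> - 1) * \<tau>) powr ((real m - 2) / 2))"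
    using two_plus_mult_pos[of \<rho>] \<rho> by (auto intro!: continuous_intros) (metis order_less_irrefl)
  then have "((\<lambda>\<tau>. sqrt \<tau> ^ (m - 2) * (2 + (\<rho> - 1) * \<tau>) powr ((real m - 2) / 2))
      has_integral kernel_moment m 1 0 \<rho>) {0..1}"
    unfolding kernel_moment_def by (simp add: integrable_integral integrable_continuous_interval)
  then have "((\<lambda>\<tau>. cosh_density m ((\<rho> - 1) * \<tau> + 1)) has_integral
      sqrt (\<rho> - 1) ^ (m - 2) * kernel_moment m 1 0 \<rho>) {0..1}"
    by (rule has_integral_eq[rotated, OF has_integral_mult_right]) (simp add: cosh_density_affine[OF m \<rho>])
  with rescaled have "I / (\<rho> - 1) = sqrt (\<rho> - 1) ^ (m - 2) * kernel_moment m 1 0 \<rho>"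
    by (rule has_integral_unique)
  then have "I = (sqrt (\<rho> - 1) ^ 2 * sqrt (\<rho> - 1) ^ (m - 2)) * kernel_moment m 1 0 \<rho>"
    using \<rho> by (simp add: field_simps)
  also have "sqrt (\<rho> - 1) ^ 2 * sqrt (\<rho> - 1) ^ (m - 2) = sqrt (\<rho> - 1) ^ m"
    using m by (metis le_add_diff_inverse power_add)
  finally show ?thesis unfolding I_def .
qed

lemma has_real_derivative_integral_upper:
  fixes g :: "real \<Rightarrow> real"
  assumes "continuous_on {a..b} g" "a < y" "y < b"
  shows "((\<lambda>x. integral {a..x} g) has_real_derivative g y) (at y)"
proof -
  have "((\<lambda>x. integral {a..x} g) has_real_derivative g y) (at y within {a..b})"
    using assms by (intro integral_has_real_derivative) auto
  moreover have "y \<in> interior {a..b}" using assms(2,3) by simp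
  ultimately show ?thesis using at_within_interior by metis
qed

definition cosh_primitive :: "nat \<Rightarrow> real \<Rightarrow> real" where
  "cosh_primitive m y = integral {0..y} (cosh_density m)"

lemma has_real_derivative_cosh_primitive:
  "0 < y \<Longrightarrow> (cosh_primitive m has_real_derivative cosh_density m y) (at y)"
  unfolding cosh_primitive_def[abs_def]
  by (rule has_real_derivative_integral_upper[of 0 "y + 1"]) (auto intro: continuous_on_cosh_density)

lemma has_real_derivative_cosh_primitive_cosh:
  "((\<lambda>t. cosh_primitive m (cosh t)) has_real_derivative cosh_density m (cosh t) * sinh t) (at t)"
  using DERIV_chain2[OF has_real_derivative_cosh_primitive[of "cosh t" m]
      has_field_derivative_cosh[OF DERIV_ident]]
  by (simp add: cosh_real_pos)

lemma integral_cosh_density_eq_cosh_primitive: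
  assumes "1 \<le> \<rho>"
  shows "integral {1..\<rho>} (cosh_density m) = cosh_primitive m \<rho> - cosh_primitive m 1"
proof -
  have "integral {0..1} (cosh_density m) + integral {1..\<rho>} (cosh_density m) = integral {0..\<rho>} (cosh_density m)"
    using assms
    by (intro Henstock_Kurzweil_Integration.integral_combine integrable_continuous_interval
        continuous_on_cosh_density) auto
  then show ?thesis unfolding cosh_primitive_def by simp
qed

lemma cosh_primitive_eq_vol_ratio:
  assumes m: "2 \<le> m" and y: "1 < y"
  shows "cosh_primitive m y - cosh_primitive m 1 = (y\<^sup>2 - 1) powr (real m / 2) * vol_ratio m y"
proof -
  have "cosh_primitive m y - cosh_primitive m 1 = sqrt (y - 1) ^ m * kernel_moment m 1 0 y"
    using integral_cosh_density_eq_cosh_primitive[of y m] integral_cosh_density[OF m y] y by simp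
  also have "sqrt (y - 1) ^ m = (y - 1) powr (real m / 2)"
    using y by (intro sqrt_power_eq_powr) simp
  also have "(y - 1) powr (real m / 2) = (y\<^sup>2 - 1) powr (real m / 2) * (y + 1) powr (- (real m / 2))"
  proof -
    have "(y\<^sup>2 - 1) powr (real m / 2) = (y - 1) powr (real m / 2) * (y + 1) powr (real m / 2)"
      using y by (simp add: powr_mult[symmetric] power2_eq_square algebra_simps)
    moreover have "(y + 1) powr (real m / 2) * (y + 1) powr (- (real m / 2)) = 1"
      using y by (simp add: powr_add[symmetric])
    ultimately show ?thesis by (simp add: mult.assoc)
  qed
  finally show ?thesis by (simp add: vol_ratio_def)
qed

definition sinh_power_integral :: "nat \<Rightarrow> real \<Rightarrow> real" where
  "sinh_power_integral m s = integral {0..s} (\<lambda>t. sinh t ^ (m - 1))"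

lemma sinh_power_integral_nonneg: "0 \<le> s \<Longrightarrow> 0 \<le> sinh_power_integral m s"
  unfolding sinh_power_integral_def
  by (rule integral_nonneg) (auto intro!: integrable_continuous_interval continuous_intros)

lemma sinh_power_integral_eq_cosh_primitive:
  assumes m: "2 \<le> m" and s: "0 \<le> s"
  shows "sinh_power_integral m s = cosh_primitive m (cosh s) - cosh_primitive m 1"
proof -
  have "((\<lambda>t. sinh t ^ (m - 1)) has_integral (cosh_primitive m (cosh s) - cosh_primitive m (cosh 0))) {0..s}"
  proof (rule fundamental_theorem_of_calculus[OF s])
    fix t assume "t \<in> {0..s}"
    then have "((\<lambda>t. cosh_primitive m (cosh t)) has_real_derivative sinh t ^ (m - 1)) (at t)"
      using has_real_derivative_cosh_primitive_cosh[of m t] cosh_density_cosh[OF m, of t] by simp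
    then show "((\<lambda>t. cosh_primitive m (cosh t)) has_vector_derivative sinh t ^ (m - 1)) (at t within {0..s})"
      by (simp add: has_real_derivative_iff_has_vector_derivative[symmetric] has_field_derivative_at_within)
  qed
  then show ?thesis unfolding sinh_power_integral_def by (simp add: integral_unique)
qed

lemma sinh_power_integral_eq:
  assumes m: "2 \<le> m" and s: "0 \<le> s"
  shows "sinh_power_integral m s = sinh s ^ m * vol_ratio m (cosh s)"
proof (cases "s = 0")
  case True
  then show ?thesis using m by (simp add: sinh_power_integral_def)
next
  case False
  with s have "1 < cosh s" using cosh_real_strict_mono[of 0 s] by simp
  from cosh_primitive_eq_vol_ratio[OF m this]
  have "sinh_power_integral m s = ((cosh s)\<^sup>2 - 1) powr (real m / 2) * vol_ratio m (cosh s)"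
    using sinh_power_integral_eq_cosh_primitive[OF m s] by simp
  also have "((cosh s)\<^sup>2 - 1) powr (real m / 2) = sinh s ^ m"
    using s False sqrt_power_eq_powr[of "(sinh s)\<^sup>2" m] by (simp add: sinh_square_eq[symmetric])
  finally show ?thesis .
qed

lemma sinh_power_integral_less:
  assumes m: "2 \<le> m" and s: "0 < s"
  shows "real (m - 1) * sinh_power_integral m s < sinh s ^ (m - 1)"
proof -
  define D where "D t = sinh t ^ (m - 1) - real (m - 1) * (cosh_primitive m (cosh t) - cosh_primitive m 1)"
    for t
  define D' where "D' t = real (m - 1) * sinh t ^ (m - 2) * (cosh t - sinh t)" for t
  have m1: "m - 1 = Suc (m - 2)" using m by simp
  have "(D has_real_derivative D' t) (at t)" if "0 \<le> t" for t
  proof -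
    have "m - 1 - Suc 0 = m - 2" by simp
    then have "((\<lambda>t. sinh t ^ (m - 1)) has_real_derivative real (m - 1) * sinh t ^ (m - 2) * cosh t) (at t)"
      using DERIV_chain2[OF DERIV_pow has_field_derivative_sinh[OF DERIV_ident], of "m - 1" t]
      by (simp only: mult.assoc mult_1_right)
    moreover have "((\<lambda>t. real (m - 1) * (cosh_primitive m (cosh t) - cosh_primitive m 1))
        has_real_derivative real (m - 1) * (cosh_density m (cosh t) * sinh t - 0)) (at t)"
      by (intro DERIV_cmult DERIV_diff has_real_derivative_cosh_primitive_cosh DERIV_const)
    ultimately have "(D has_real_derivative real (m - 1) * sinh t ^ (m - 2) * cosh t -
        real (m - 1) * (cosh_density m (cosh t) * sinh t - 0)) (at t)"
      unfolding D_def[abs_def] by (rule DERIV_diff)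
    moreover have "cosh_density m (cosh t) * sinh t = sinh t ^ (m - 2) * sinh t"
      using cosh_density_cosh[OF m that] unfolding m1 by (simp add: mult.commute)
    ultimately show ?thesis
      by (simp only: D'_def) (simp add: algebra_simps)
  qed
  then obtain \<xi> where \<xi>: "0 < \<xi>" "\<xi> < s" "D s - D 0 = (s - 0) * D' \<xi>"
    using MVT2[OF s, of D D'] by auto
  have "0 < D' \<xi>"
    using m \<xi>(1) sinh_less_cosh_real[of \<xi>] unfolding D'_def by (intro mult_pos_pos) auto
  moreover have "D 0 = 0" unfolding D_def using m1 by simp
  ultimately have "0 < D s" using \<xi> s by simp
  then show ?thesis
    unfolding D_def using sinh_power_integral_eq_cosh_primitive[OF m, of s] s by simp
qed

lemma vol_ratio_ode_gt_one:
  assumes m: "2 \<le> m" and \<sigma>: "1 < \<sigma>"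
  shows "real m * \<sigma> * vol_ratio m \<sigma> + (\<sigma>\<^sup>2 - 1) * deriv (vol_ratio m) \<sigma> = 1"
proof -
  define R where "R y = (y\<^sup>2 - 1) powr (real m / 2) * vol_ratio m y" for y
  define P where "P = (\<sigma>\<^sup>2 - 1) powr (real m / 2 - 1)"
  have s0: "0 < \<sigma>\<^sup>2 - 1" using \<sigma> by (simp add: power_less_one_iff)
  have z': "(vol_ratio m has_real_derivative deriv (vol_ratio m) \<sigma>) (at \<sigma>)"
    using smooth_real_on_has_deriv[OF smooth_real_on_vol_ratio] \<sigma> by simp
  have "(R has_real_derivative (real m / 2) * (\<sigma>\<^sup>2 - 1) powr (real m / 2 - 1) * (2 * \<sigma>) * vol_ratio m \<sigma>
      + (\<sigma>\<^sup>2 - 1) powr (real m / 2) * deriv (vol_ratio m) \<sigma>) (at \<sigma>)"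
    unfolding R_def[abs_def] using s0 z'
    by (auto intro!: derivative_eq_intros simp: power2_eq_square algebra_simps)
  moreover have "(R has_real_derivative cosh_density m \<sigma>) (at \<sigma>)"
  proof -
    have ev: "\<forall>\<^sub>F y in nhds \<sigma>. cosh_primitive m y - cosh_primitive m 1 = R y"
      using eventually_nhds_in_open[of "{1<..}" \<sigma>] \<sigma> cosh_primitive_eq_vol_ratio[OF m]
      by (auto simp: R_def elim!: eventually_mono)
    have "((\<lambda>y. cosh_primitive m y - cosh_primitive m 1) has_real_derivative cosh_density m \<sigma>) (at \<sigma>)"
      using has_real_derivative_cosh_primitive[of \<sigma> m] \<sigma> by (auto intro!: derivative_eq_intros)
    then show ?thesis
      using DERIV_cong_ev[OF refl ev refl] by simp
  qed
  moreover have "cosh_density m \<sigma> = P"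
    using sqrt_power_eq_powr[OF s0, of "m - 2"] m
    by (simp add: cosh_density_def P_def of_nat_diff diff_divide_distrib)
  moreover have "(\<sigma>\<^sup>2 - 1) powr (real m / 2) = P * (\<sigma>\<^sup>2 - 1)"
  proof -
    have "(\<sigma>\<^sup>2 - 1) powr (real m / 2) = (\<sigma>\<^sup>2 - 1) powr ((real m / 2 - 1) + 1)" by simp
    also have "\<dots> = P * (\<sigma>\<^sup>2 - 1)" unfolding P_def powr_add using s0 by simp
    finally show ?thesis .
  qed
  ultimately have "P * 1 = P * (real m * \<sigma> * vol_ratio m \<sigma> + (\<sigma>\<^sup>2 - 1) * deriv (vol_ratio m) \<sigma>)"
    using DERIV_unique by (fastforce simp: P_def algebra_simps)
  moreover have "0 < P" using s0 by (simp add: P_def)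
  ultimately show ?thesis by simp
qed

lemma vol_ratio_ode:
  assumes m: "2 \<le> m" and \<sigma>: "1 \<le> \<sigma>"
  shows "real m * \<sigma> * vol_ratio m \<sigma> + (\<sigma>\<^sup>2 - 1) * deriv (vol_ratio m) \<sigma> = 1"
proof (cases "\<sigma> = 1")
  case False
  then show ?thesis using vol_ratio_ode_gt_one[OF m] \<sigma> by simp
next
  case True
  define g where "g y = real m * y * vol_ratio m y + (y\<^sup>2 - 1) * deriv (vol_ratio m) y" for y
  have "continuous_on {-1<..} g"
    unfolding g_def[abs_def]
    by (intro continuous_intros smooth_real_on_imp_continuous_on smooth_real_on_vol_ratio
        smooth_real_on_deriv open_greaterThan)
  then have "isCont g 1"
    using continuous_on_interior[of "{-1<..}" g 1] by (simp add: interior_open)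
  then have "(g \<longlongrightarrow> g 1) (at_right 1)"
    by (simp add: isCont_def filterlim_at_split)
  moreover have "\<forall>\<^sub>F y in at_right 1. g y = 1"
    unfolding eventually_at_right_field using vol_ratio_ode_gt_one[OF m] g_def by (auto intro!: exI[of _ 2])
  then have "(g \<longlongrightarrow> 1) (at_right 1)"
    by (rule tendsto_eventually[THEN tendsto_cong[THEN iffD1, rotated]]) (auto elim: eventually_mono)
  ultimately have "g 1 = 1"
    using tendsto_unique[OF trivial_limit_at_right_real] by blast
  then show ?thesis using True g_def by simp
qed

section \<open>The profile of \<open>f\<^sub>c\<close>\<close>

definition radicand :: "nat \<Rightarrow> real \<Rightarrow> real \<Rightarrow> real" where
  "radicand m c \<sigma> = 1 - c\<^sup>2 * (\<sigma>\<^sup>2 - 1) * (vol_ratio m \<sigma>)\<^sup>2"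

definition profile_slope :: "nat \<Rightarrow> real \<Rightarrow> real \<Rightarrow> real" where
  "profile_slope m c \<sigma> = c * vol_ratio m \<sigma> / sqrt (radicand m c \<sigma>)"

text \<open>The lower limit \<open>1/2\<close> puts \<open>\<sigma> = 1\<close>, the value of \<open>cosh r\<close> at the origin, in the
  interior of the domain.\<close>
definition profile :: "nat \<Rightarrow> real \<Rightarrow> real \<Rightarrow> real" where
  "profile m c \<sigma> = integral {1/2..\<sigma>} (profile_slope m c)"

lemma radial_mean_curvature_cmc:
  fixes m \<sigma> c z z' S :: real
  assumes S: "0 < S" "S\<^sup>2 = 1 - c\<^sup>2 * (\<sigma>\<^sup>2 - 1) * z\<^sup>2"
    and ode: "m * \<sigma> * z + (\<sigma>\<^sup>2 - 1) * z' = 1"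
  shows "radial_mean_curvature m \<sigma> (c * z / S)
    (c * z' / S + c ^ 3 * z * (\<sigma> * z\<^sup>2 + (\<sigma>\<^sup>2 - 1) * z * z') / S ^ 3) = c"
proof -
  have W: "1 + (\<sigma>\<^sup>2 - 1) * (c * z / S)\<^sup>2 = 1 / S\<^sup>2"
    using S by (simp add: field_simps power_mult_distrib)
  have "radial_mean_curvature m \<sigma> (c * z / S)
      (c * z' / S + c ^ 3 * z * (\<sigma> * z\<^sup>2 + (\<sigma>\<^sup>2 - 1) * z * z') / S ^ 3) =
    (m - 1) * \<sigma> * c * z + c * (\<sigma> * z + (\<sigma>\<^sup>2 - 1) * z') * S\<^sup>2 +
      (\<sigma>\<^sup>2 - 1) * c ^ 3 * z * (\<sigma> * z\<^sup>2 + (\<sigma>\<^sup>2 - 1) * z * z')"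
    unfolding radial_mean_curvature_def W using S(1)
    by (simp add: real_sqrt_divide field_simps power2_eq_square power3_eq_cube)
  also have "\<dots> = c * (m * \<sigma> * z + (\<sigma>\<^sup>2 - 1) * z')"
    unfolding S(2) by (simp add: algebra_simps power2_eq_square power3_eq_cube)
  finally show ?thesis using ode by simp
qed

locale cmc_range =
  fixes m :: nat and c :: real
  assumes m: "2 \<le> m" and c_lower: "1 - real m \<le> c" and c_upper: "c \<le> real m - 1"
begin

lemma radicand_pos:
  assumes "0 < \<sigma>"
  shows "0 < radicand m c \<sigma>"
proof (cases "\<sigma> \<le> 1")
  case True
  then have "\<sigma>\<^sup>2 - 1 \<le> 0" using assms by (simp add: power_le_one)
  then have "c\<^sup>2 * (\<sigma>\<^sup>2 - 1) * (vol_ratio m \<sigma>)\<^sup>2 \<le> 0"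
    by (simp add: mult_nonneg_nonpos mult_nonpos_nonneg)
  then show ?thesis unfolding radicand_def by simp
next
  case False
  define s where "s = arcosh \<sigma>"
  have s: "0 < s" "cosh s = \<sigma>" using False by (auto simp: s_def)
  have sh: "0 < sinh s" using s by simp
  define y where "y = sinh s * vol_ratio m (cosh s)"
  have B: "sinh_power_integral m s = sinh s ^ (m - 1) * y"
  proof -
    have "sinh s ^ m = sinh s ^ (m - 1) * sinh s"
      using m by (simp add: power_Suc2[symmetric] Suc_diff_Suc numeral_2_eq_2)
    then show ?thesis using sinh_power_integral_eq[OF m, of s] s by (simp add: y_def)
  qed
  have "y = sinh_power_integral m s / sinh s ^ (m - 1)" using B sh by simp
  then have y0: "0 \<le> y" using sinh_power_integral_nonneg[of s m] sh s by simp
  have "real (m - 1) * y * sinh s ^ (m - 1) < 1 * sinh s ^ (m - 1)"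
    using sinh_power_integral_less[OF m s(1)] B by (simp add: algebra_simps)
  then have y1: "real (m - 1) * y < 1"
    using sh by (simp only: mult_less_cancel_right) simp
  have "\<bar>c\<bar> \<le> real (m - 1)" using c_lower c_upper m by (simp add: of_nat_diff)
  then have "\<bar>c\<bar> * y < 1" using y0 y1 by (meson le_less_trans mult_right_mono)
  then have "(\<bar>c\<bar> * y)\<^sup>2 < 1" using y0 by (simp add: abs_square_less_1)
  moreover have "c\<^sup>2 * (\<sigma>\<^sup>2 - 1) * (vol_ratio m \<sigma>)\<^sup>2 = (\<bar>c\<bar> * y)\<^sup>2"
    using s by (simp add: y_def power_mult_distrib sinh_square_eq)
  ultimately show ?thesis unfolding radicand_def by simp
qed

lemma smooth_real_on_radicand: "smooth_real_on {0<..} (radicand m c)"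
proof -
  have "smooth_real_on {0<..}
      (\<lambda>\<sigma>. 1 + (- c\<^sup>2) * ((\<sigma> * \<sigma> + (- 1)) * (vol_ratio m \<sigma> * vol_ratio m \<sigma>)))"
    by (intro smooth_real_on_add smooth_real_on_mult smooth_real_on_const smooth_real_on_id
        smooth_real_on_subset[OF smooth_real_on_vol_ratio]) auto
  then show ?thesis
    by (rule smooth_real_on_cong) (auto simp: radicand_def power2_eq_square)
qed

lemma smooth_real_on_profile_slope: "smooth_real_on {0<..} (profile_slope m c)"
proof -
  have "smooth_real_on {0<..} (\<lambda>\<sigma>. c * vol_ratio m \<sigma> * (\<lambda>q. q powr (- 1 / 2)) (radicand m c \<sigma>))"
    by (intro smooth_real_on_mult smooth_real_on_const smooth_real_on_subset[OF smooth_real_on_vol_ratio]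
        smooth_real_on_compose[OF smooth_real_on_powr smooth_real_on_radicand])
      (auto simp: radicand_pos)
  then show ?thesis
    by (rule smooth_real_on_cong)
      (auto simp: profile_slope_def powr_minus_divide powr_half_sqrt radicand_pos[THEN less_imp_le])
qed

lemma has_real_derivative_profile:
  assumes "1/2 < \<sigma>"
  shows "(profile m c has_real_derivative profile_slope m c \<sigma>) (at \<sigma>)"
  unfolding profile_def[abs_def] using assms
  by (intro has_real_derivative_integral_upper[of _ "\<sigma> + 1"]
      continuous_on_subset[OF smooth_real_on_imp_continuous_on[OF smooth_real_on_profile_slope]]) auto

lemma has_real_derivative_profile_slope:
  assumes \<sigma>: "0 < \<sigma>"
  defines "z \<equiv> vol_ratio m \<sigma>" and "z' \<equiv> deriv (vol_ratio m) \<sigma>" and "S \<equiv> sqrt (radicand m c \<sigma>)"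
  shows "(profile_slope m c has_real_derivative
    c * z' / S + c ^ 3 * z * (\<sigma> * z\<^sup>2 + (\<sigma>\<^sup>2 - 1) * z * z') / S ^ 3) (at \<sigma>)"
proof -
  have Q: "0 < radicand m c \<sigma>" using radicand_pos[OF \<sigma>] .
  then have S: "0 < S" by (simp add: S_def)
  have dz: "(vol_ratio m has_real_derivative z') (at \<sigma>)"
    unfolding z'_def using smooth_real_on_has_deriv[OF smooth_real_on_vol_ratio] \<sigma> by simp
  have "(radicand m c has_real_derivative - (c\<^sup>2 * (2 * \<sigma> * z\<^sup>2 + (\<sigma>\<^sup>2 - 1) * (2 * z * z')))) (at \<sigma>)"
    unfolding radicand_def[abs_def] z_def
    by (auto intro!: derivative_eq_intros dz simp: power2_eq_square algebra_simps)
  then have "(profile_slope m c has_real_derivative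
      (c * z' * S - c * z * (- (c\<^sup>2 * (2 * \<sigma> * z\<^sup>2 + (\<sigma>\<^sup>2 - 1) * (2 * z * z'))) * inverse (sqrt (radicand m c \<sigma>)) / 2))
        / (S * S)) (at \<sigma>)"
    unfolding profile_slope_def[abs_def] S_def z_def
    using Q by (auto intro!: derivative_eq_intros dz)
  then show ?thesis
    by (rule DERIV_cong)
      (use S in \<open>simp add: S_def[symmetric] field_simps power2_eq_square power3_eq_cube\<close>)
qed

lemma smooth_real_on_radial_profile: "smooth_real_on {-1/3<..<1} (\<lambda>u. profile m c ((1 + u) / (1 - u)))"
proof -
  have "smooth_real_on {1/2<..} (profile m c)"
    by (rule smooth_real_on_primitive[OF has_real_derivative_profile])
      (auto intro: smooth_real_on_subset[OF smooth_real_on_profile_slope])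
  moreover have "smooth_real_on {-1/3<..<1} (\<lambda>u::real. (1 + u) / (1 - u))"
  proof (rule smooth_real_on_cong)
    show "smooth_real_on {-1/3<..<1} (\<lambda>u::real. (1 + u) * (\<lambda>q. q powr (-1)) (1 + (-1) * u))"
      by (intro smooth_real_on_mult smooth_real_on_add smooth_real_on_const smooth_real_on_id
          smooth_real_on_compose[OF smooth_real_on_powr]) auto
  qed (auto simp: powr_minus_divide)
  ultimately show ?thesis
    by (rule smooth_real_on_compose) (auto simp: field_simps)
qed

lemma A_fun_eq:
  assumes s: "0 \<le> s"
  shows "A_fun m c s = c * sinh s * vol_ratio m (cosh s)"
proof (cases "s = 0")
  case True
  then show ?thesis using m by (simp add: A_fun_def)
next
  case False
  then have sh: "0 < sinh s" using s by simp
  have "A_fun m c s = c / sinh s ^ (m - 1) * sinh_power_integral m s"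
    by (simp only: A_fun_def sinh_power_integral_def)
  also have "sinh_power_integral m s = sinh s ^ (m - 1) * (sinh s * vol_ratio m (cosh s))"
    using sinh_power_integral_eq[OF m s] m
    by (simp add: power_Suc2[symmetric] Suc_diff_Suc numeral_2_eq_2 mult.assoc)
  finally show ?thesis using sh by simp
qed

lemma f_fun_integrand_eq:
  assumes s: "0 \<le> s"
  shows "A_fun m c s / sqrt (1 - (A_fun m c s)\<^sup>2) = profile_slope m c (cosh s) * sinh s"
proof -
  have "1 - (A_fun m c s)\<^sup>2 = radicand m c (cosh s)"
    by (simp add: A_fun_eq[OF s] radicand_def power_mult_distrib sinh_square_eq)
  then show ?thesis
    by (simp add: A_fun_eq[OF s] profile_slope_def)
qed

lemma f_fun_eq:
  assumes x: "norm x < 1"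
  shows "f_fun m c x = profile m c (hyp_cosh x) - profile m c 1"
proof -
  have "((\<lambda>t. profile_slope m c (cosh t) * sinh t) has_integral
      profile m c (cosh (hyp_r x)) - profile m c (cosh 0)) {0..hyp_r x}"
  proof (rule fundamental_theorem_of_calculus[OF hyp_r_nonneg[OF x]])
    fix t :: real
    have "1/2 < cosh t" using cosh_real_ge_1[of t] by simp
    from DERIV_chain2[OF has_real_derivative_profile[OF this] has_field_derivative_cosh[OF DERIV_ident]]
    show "((\<lambda>t. profile m c (cosh t)) has_vector_derivative profile_slope m c (cosh t) * sinh t)
        (at t within {0..hyp_r x})"
      by (simp add: has_real_derivative_iff_has_vector_derivative[symmetric] has_field_derivative_at_within)
  qed
  then have "((\<lambda>t. profile_slope m c (cosh t) * sinh t) has_integral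
      profile m c (hyp_cosh x) - profile m c 1) {0..hyp_r x}"
    by (simp add: cosh_hyp_r[OF x])
  then have "((\<lambda>s. A_fun m c s / sqrt (1 - (A_fun m c s)\<^sup>2)) has_integral
      profile m c (hyp_cosh x) - profile m c 1) {0..hyp_r x}"
    by (rule has_integral_eq[rotated]) (simp add: f_fun_integrand_eq)
  then show ?thesis
    unfolding f_fun_def by (simp add: integral_unique)
qed

lemma smooth_on_f_fun: "smooth_on (ball 0 1) (f_fun m c :: real^'n \<Rightarrow> real)"
proof -
  have "(\<lambda>x::real^'n. profile m c ((1 + (norm x)\<^sup>2) / (1 - (norm x)\<^sup>2)) + - profile m c 1)
      \<in> radial_algebra {-1/3<..<1}"
    by (intro radial_algebra.add radial_algebra.radial[OF smooth_real_on_radial_profile] radial_algebra_const)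
  then have "smooth_on (ball 0 1)
      (\<lambda>x::real^'n. profile m c ((1 + (norm x)\<^sup>2) / (1 - (norm x)\<^sup>2)) + - profile m c 1)"
    by (rule radial_algebra_smooth_on[rotated]) auto
  then show ?thesis
    by (rule smooth_on_cong) (auto simp: f_fun_eq hyp_cosh_def)
qed

lemma f_fun_mean_curvature:
  fixes x :: "real^'n"
  assumes "CARD('n) = m" and x: "norm x < 1"
  shows "real CARD('n) * metric_inner prod_metric (graph_map (\<lambda>y. f_fun m c y + d) x)
      (mean_curv_vec (\<lambda>y. f_fun m c y + d) x) (graph_normal (\<lambda>y. f_fun m c y + d) x) = c"
proof -
  interpret radial_graph "\<lambda>y::real^'n. f_fun m c y + d" "profile m c" "profile_slope m c"
    "deriv (profile_slope m c)" "d - profile m c 1"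
  proof
    show "f_fun m c y + d = profile m c (hyp_cosh y) + (d - profile m c 1)" if "norm y < 1" for y :: "real^'n"
      using f_fun_eq[OF that] by simp
    show "(profile m c has_real_derivative profile_slope m c \<sigma>) (at \<sigma>)" if "1 \<le> \<sigma>" for \<sigma>
      using that by (intro has_real_derivative_profile) simp
    show "(profile_slope m c has_real_derivative deriv (profile_slope m c) \<sigma>) (at \<sigma>)" if "1 \<le> \<sigma>" for \<sigma>
      using that by (intro smooth_real_on_has_deriv[OF smooth_real_on_profile_slope]) simp
  qed
  define \<sigma> where "\<sigma> = hyp_cosh x"
  have \<sigma>: "1 \<le> \<sigma>" using hyp_cosh_ge_one[OF x] by (simp add: \<sigma>_def)
  define z where "z = vol_ratio m \<sigma>"
  define z' where "z' = deriv (vol_ratio m) \<sigma>"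
  define S where "S = sqrt (radicand m c \<sigma>)"
  have S: "0 < S" "S\<^sup>2 = 1 - c\<^sup>2 * (\<sigma>\<^sup>2 - 1) * z\<^sup>2"
    using radicand_pos[of \<sigma>] \<sigma> by (simp_all add: S_def z_def radicand_def)
  have "real CARD('n) * metric_inner prod_metric (graph_map (\<lambda>y. f_fun m c y + d) x)
      (mean_curv_vec (\<lambda>y. f_fun m c y + d) x) (graph_normal (\<lambda>y. f_fun m c y + d) x) =
    radial_mean_curvature (real CARD('n)) \<sigma> (profile_slope m c \<sigma>) (deriv (profile_slope m c) \<sigma>)"
    unfolding \<sigma>_def by (rule mean_curvature_eq[OF x])
  also have "deriv (profile_slope m c) \<sigma> =
      c * z' / S + c ^ 3 * z * (\<sigma> * z\<^sup>2 + (\<sigma>\<^sup>2 - 1) * z * z') / S ^ 3"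
    using has_real_derivative_profile_slope[of \<sigma>] \<sigma> unfolding z_def z'_def S_def
    by (intro DERIV_imp_deriv) simp
  also have "profile_slope m c \<sigma> = c * z / S"
    by (simp add: profile_slope_def z_def S_def)
  also have "radial_mean_curvature (real CARD('n)) \<sigma> (c * z / S)
      (c * z' / S + c ^ 3 * z * (\<sigma> * z\<^sup>2 + (\<sigma>\<^sup>2 - 1) * z * z') / S ^ 3) = c"
    using S vol_ratio_ode[OF m \<sigma>] assms(1)
    by (intro radial_mean_curvature_cmc) (simp_all add: z_def z'_def)
  finally show ?thesis .
qed

end

theorem proposition1p2:
  fixes c :: real
  assumes m2: "CARD('m::finite) \<ge> 2"
    and c_range: "1 - real CARD('m) \<le> c" "c \<le> real CARD('m) - 1"
  shows "smooth_on (ball 0 1) (f_fun CARD('m) c :: real^'m \<Rightarrow> real)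
    \<and> (\<forall>p::real^('m option). base_pt p \<in> ball 0 1 \<longrightarrow>
          (\<exists>!d::real. p \<in> graph_set (\<lambda>x. f_fun CARD('m) c x + d)))
    \<and> (\<forall>d::real. \<forall>x::real^'m. x \<in> ball 0 1 \<longrightarrow>
          real CARD('m) *
            metric_inner prod_metric (graph_map (\<lambda>y. f_fun CARD('m) c y + d) x)
              (mean_curv_vec (\<lambda>y. f_fun CARD('m) c y + d) x)
              (graph_normal (\<lambda>y. f_fun CARD('m) c y + d) x) = c)"
proof -
  interpret cmc_range "CARD('m)" c
    using m2 c_range by unfold_locales auto
  have "\<exists>!d. p \<in> graph_set (\<lambda>x. f_fun CARD('m) c x + d)" if "base_pt p \<in> ball 0 1" for p :: "real^'m option"
    using that by (auto simp: mem_graph_set_iff intro!: ex1I[of _ "p $ None - f_fun CARD('m) c (base_pt p)"])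
  then show ?thesis
    using smooth_on_f_fun f_fun_mean_curvature[OF refl] by auto
qed

end
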